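(* Let $V,W$ be finite dimensional real inner product spaces, $A\in\mathrm{Lin}(V\otimes\mathbb{R}^n,W)$, $\mathbb{A}u\coloneqq A(Du)$, $1<p<\infty$, $1\le q\le\infty$. Suppose every $u\in\mathrm{BV}^{\mathbb{A}}_{\mathrm{loc}}(\mathbb{R}^n)$ is $\mathrm{L}^{p,q}$-differentiable at $\mathscr{L}^n$-a.e. $x\in\mathbb{R}^n$. Then $\mathbb{A}$ is elliptic.
   Context: Symbol $\mathbb{A}[\xi]v\coloneqq A(v\otimes\xi)$; elliptic: $\mathbb{A}[\xi]$ injective for all $\xi\ne0$. $\mathrm{BV}^{\mathbb{A}}_{\mathrm{loc}}$: $u\in\mathrm{L}^1_{\mathrm{loc}}(\mathbb{R}^n,V)$ with $\mathbb{A}u$ a $W$-valued Radon measure. Lorentz quasi-norm: for $q<\infty$, $\|f\|_{\mathrm{L}^{p,q}(\Omega)}=p^{1/q}(\int_0^\infty[\lambda\mathscr{L}^n(\{x\in\Omega:|f|>\lambda\})^{1/p}]^q\frac{d\lambda}{\lambda})^{1/q}$, and $\|f\|_{\mathrm{L}^{p,\infty}(\Omega)}=\sup_{\lambda>0}\lambda\mathscr{L}^n(\{x\in\Omega:|f|>\lambda\})^{1/p}$. $u$ is $\mathrm{L}^{p,q}$-differentiable at $x$ if there is an affine $P(y)=a+M(y-x)$ with $\|u-P\|_{\mathrm{L}^{p,q}(B_r(x))}=o(r^{1+n/p})$ as $r\downarrow0$. *)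

theory Defs
  imports "HOL-Analysis.Analysis"
begin

text \<open>The operator A in Lin(V (x) R^n, W) is represented by the bilinear map
  B v xi = A (v (x) xi).  Then the differential operator is
  (AA u) = sum_j B (partial_j u) e_j, and the symbol is AA[xi] v = B v xi.\<close>

definition elliptic :: "('v::euclidean_space \<Rightarrow> 'n::euclidean_space \<Rightarrow> 'w::euclidean_space) \<Rightarrow> bool" where
  "elliptic B \<longleftrightarrow> (\<forall>\<xi>::'n. \<xi> \<noteq> 0 \<longrightarrow> inj (\<lambda>v. B v \<xi>))"

fun Ck :: "nat \<Rightarrow> ('n::euclidean_space \<Rightarrow> real) \<Rightarrow> bool" where
  "Ck 0 f = continuous_on UNIV f"
| "Ck (Suc k) f = ((\<forall>x. f differentiable (at x)) \<and>
      (\<forall>i\<in>Basis. Ck k (\<lambda>x. frechet_derivative f (at x) i)))"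

definition test_function :: "('n::euclidean_space \<Rightarrow> real) \<Rightarrow> bool" where
  "test_function \<phi> \<longleftrightarrow> (\<forall>k. Ck k \<phi>) \<and> compact (closure {x. \<phi> x \<noteq> 0})"

text \<open>A W-valued Radon measure on R^n, written in polar form g * nu with nu a locally
  finite Borel measure (its total variation) and g a Borel density with |g| <= 1.\<close>
definition W_radon :: "'n::euclidean_space measure \<Rightarrow> ('n \<Rightarrow> 'w::euclidean_space) \<Rightarrow> bool" where
  "W_radon \<nu> g \<longleftrightarrow> sets \<nu> = sets lborel \<and> (\<forall>K. compact K \<longrightarrow> emeasure \<nu> K < \<infinity>) \<and>
     g \<in> borel_measurable \<nu> \<and> (\<forall>x. norm (g x) \<le> 1)"

definition L1_loc :: "('n::euclidean_space \<Rightarrow> 'v::euclidean_space) \<Rightarrow> bool" where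
  "L1_loc u \<longleftrightarrow> (\<forall>K. compact K \<longrightarrow> u absolutely_integrable_on K)"

text \<open>u in BV^A_loc: u in L^1_loc and the distribution AA u = sum_j B (partial_j u) e_j
  is a W-valued Radon measure.\<close>
definition BVA_loc :: "('v::euclidean_space \<Rightarrow> 'n::euclidean_space \<Rightarrow> 'w::euclidean_space)
     \<Rightarrow> ('n \<Rightarrow> 'v) \<Rightarrow> bool" where
  "BVA_loc B u \<longleftrightarrow> L1_loc u \<and>
     (\<exists>\<nu> (g::'n \<Rightarrow> 'w). W_radon \<nu> g \<and>
        (\<forall>\<phi>. test_function \<phi> \<longrightarrow>
           (\<integral>x. \<phi> x *\<^sub>R g x \<partial>\<nu>) =
           - (\<Sum>j\<in>Basis. \<integral>x. frechet_derivative \<phi> (at x) j *\<^sub>R B (u x) j \<partial>lebesgue)))"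

definition distr_fun :: "'n::euclidean_space set \<Rightarrow> ('n \<Rightarrow> 'v::real_normed_vector) \<Rightarrow> real \<Rightarrow> ennreal" where
  "distr_fun \<Omega> f t = emeasure lebesgue {x\<in>\<Omega>. norm (f x) > t}"

text \<open>Lorentz quasi-norm ||f||_{L^{p,q}(Omega)}, with q in [1,infinity] (q = top is infinity).\<close>
definition lorentz_norm :: "real \<Rightarrow> ennreal \<Rightarrow> 'n::euclidean_space set \<Rightarrow> ('n \<Rightarrow> 'v::real_normed_vector) \<Rightarrow> ennreal" where
  "lorentz_norm p q \<Omega> f =
    (if q = top then
       (SUP t\<in>{0<..}. (if distr_fun \<Omega> f t = top then top
                        else ennreal (t * enn2real (distr_fun \<Omega> f t) powr (1/p))))
     else
       (let qr = enn2real q;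
            I = (\<integral>\<^sup>+ t\<in>{0<..}.
                   (if distr_fun \<Omega> f t = top then top
                    else ennreal ((t * enn2real (distr_fun \<Omega> f t) powr (1/p)) powr qr / t)) \<partial>lborel)
        in if I = top then top else ennreal (p powr (1/qr) * enn2real I powr (1/qr))))"

definition Lpq_differentiable_at :: "real \<Rightarrow> ennreal \<Rightarrow> ('n::euclidean_space \<Rightarrow> 'v::euclidean_space) \<Rightarrow> 'n \<Rightarrow> bool" where
  "Lpq_differentiable_at p q u x \<longleftrightarrow>
     (\<exists>(a::'v) (M::'n \<Rightarrow> 'v). linear M \<and>
        (\<forall>\<epsilon>>0. \<forall>\<^sub>F r in at_right 0.
           lorentz_norm p q (ball x r) (\<lambda>y. u y - (a + M (y - x)))
             \<le> ennreal (\<epsilon> * r powr (1 + real DIM('n) / p))))"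

end

theory Submission
  imports Defs
begin

text \<open>If \<open>\<A>\<close> is not elliptic, there are \<open>w \<noteq> 0\<close> and a unit vector \<open>\<xi>\<close> with \<open>B w \<xi> = 0\<close>.
  A ridge function \<open>u(y) = F(y \<bullet> \<xi>) w\<close> with \<open>F \<in> L\<^sup>1\<^sub>l\<^sub>o\<^sub>c\<close> then lies in \<open>BV\<^sup>\<A>\<^sub>l\<^sub>o\<^sub>c\<close> with \<open>\<A>u = 0\<close>:
  its distributional gradient is parallel to \<open>\<xi>\<close>, which \<open>B w\<close> annihilates.
  Choose \<open>F(s) = \<Sum>\<^sub>k 2\<^sup>-\<^sup>k \<bar>s - q\<^sub>k\<bar>\<^sup>-\<^sup>a\<close> for an enumeration \<open>(q\<^sub>k)\<close> of the rationals and
  \<open>1/p < a < 1\<close>. Since \<open>a < 1\<close>, \<open>F\<close> is locally integrable. On the other hand, by density of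
  the poles, every ball \<open>B\<^sub>r(x)\<close> meets the slab \<open>0 < y \<bullet> \<xi> - q\<^sub>k \<le> \<delta>\<close> in a set of measure at
  least \<open>c\<delta>\<close>, for some \<open>k\<close> and all small \<open>\<delta>\<close>. Taking \<open>\<delta> \<sim> t\<^sup>-\<^sup>1\<^sup>/\<^sup>a\<close>, \<open>u - P\<close> exceeds \<open>t\<close> there
  for any affine \<open>P\<close>, so the distribution function of \<open>u - P\<close> on \<open>B\<^sub>r(x)\<close> is at least of order
  \<open>t\<^sup>-\<^sup>1\<^sup>/\<^sup>a\<close>. As \<open>ap > 1\<close>, \<open>u - P\<close> is not even in weak \<open>L\<^sup>p(B\<^sub>r(x))\<close>, its Lorentz
  quasi-norms are all infinite, and \<open>u\<close> is \<open>L\<^sup>p\<^sup>,\<^sup>q\<close>-differentiable nowhere.\<close>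

subsection \<open>Slabs in balls\<close>

lemma emeasure_lebesgue_translation:
  fixes S :: "'a::euclidean_space set"
  shows "emeasure lebesgue ((+) a ` S) = emeasure lebesgue S"
  using emeasure_lebesgue_affine[of 1 a S] by (simp add: add.commute cong: image_cong_simp)

lemma measure_ball_pos:
  fixes c :: "'a::euclidean_space"
  assumes "r > 0"
  shows "measure lebesgue (ball c r) > 0"
  using content_ball_pos[OF assms, of c] by (simp add: measure_completion)

lemma emeasure_ball_pos:
  fixes c :: "'a::euclidean_space"
  assumes "r > 0"
  shows "emeasure lebesgue (ball c r) > 0"
  using measure_ball_pos[OF assms, of c] by (simp add: emeasure_eq_measure2)

lemma card_mult_emeasure_le_if_disjoint_translates:
  fixes E F :: "'a::euclidean_space set" and t :: "'i \<Rightarrow> 'a"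
  assumes E: "E \<in> sets lebesgue" and F: "F \<in> sets lebesgue" and K: "finite K"
    and disj: "disjoint_family_on (\<lambda>k. (+) (t k) ` E) K"
    and sub: "(\<Union>k\<in>K. (+) (t k) ` E) \<subseteq> F"
  shows "of_nat (card K) * emeasure lebesgue E \<le> emeasure lebesgue F"
proof -
  have "of_nat (card K) * emeasure lebesgue E = (\<Sum>k\<in>K. emeasure lebesgue ((+) (t k) ` E))"
    by (simp add: emeasure_lebesgue_translation)
  also have "\<dots> = emeasure lebesgue (\<Union>k\<in>K. (+) (t k) ` E)"
    using E K disj by (intro sum_emeasure) (auto intro: lebesgue_sets_translation)
  also have "\<dots> \<le> emeasure lebesgue F"
    by (rule emeasure_mono[OF sub F])
  finally show ?thesis .
qed

lemma emeasure_le_card_mult_if_covered_by_translates: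
  fixes E F :: "'a::euclidean_space set" and t :: "'i \<Rightarrow> 'a"
  assumes E: "E \<in> sets lebesgue" and K: "finite K"
    and cover: "F \<subseteq> (\<Union>k\<in>K. (+) (t k) ` E)"
  shows "emeasure lebesgue F \<le> of_nat (card K) * emeasure lebesgue E"
proof -
  have "emeasure lebesgue F \<le> emeasure lebesgue (\<Union>k\<in>K. (+) (t k) ` E)"
    using E K by (intro emeasure_mono[OF cover]) (auto intro: lebesgue_sets_translation)
  also have "\<dots> \<le> (\<Sum>k\<in>K. emeasure lebesgue ((+) (t k) ` E))"
    using E K by (intro emeasure_subadditive_finite) (auto intro: lebesgue_sets_translation)
  also have "\<dots> = of_nat (card K) * emeasure lebesgue E"
    by (simp add: emeasure_lebesgue_translation)
  finally show ?thesis .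
qed

lemma slab_in_lmeasurable: "{y. \<bar>y \<bullet> \<xi> - c\<bar> < d} \<inter> ball x r \<in> lmeasurable"
  by (intro lmeasurable_open bounded_Int open_Int open_Collect_less continuous_intros) auto

lemma card_mult_emeasure_ball_slab_le:
  fixes \<xi> :: "'n::euclidean_space"
  assumes \<xi>: "norm \<xi> = 1" and \<delta>: "\<delta> > 0" and N: "real N * \<delta> \<le> R"
  shows "of_nat N * emeasure lebesgue (ball 0 R \<inter> {y. \<bar>y \<bullet> \<xi> - c\<bar> < \<delta>})
    \<le> emeasure lebesgue (ball (0::'n) (3*R))"
proof -
  define E where "E = ball 0 R \<inter> {y. \<bar>y \<bullet> \<xi> - c\<bar> < \<delta>}"
  define t where "t k = (2 * real k * \<delta>) *\<^sub>R \<xi>" for k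
  have \<xi>\<xi>: "\<xi> \<bullet> \<xi> = 1" using \<xi> by (simp add: norm_eq_sqrt_inner)
  have slab: "\<bar>y \<bullet> \<xi> - c - 2 * real k * \<delta>\<bar> < \<delta>" if "y \<in> (+) (t k) ` E" for y k
    using that by (auto simp: t_def E_def inner_add_left \<xi>\<xi>)
  have "disjoint_family_on (\<lambda>k. (+) (t k) ` E) {..<N}"
    unfolding disjoint_family_on_def
  proof clarify
    fix i j :: nat assume "i \<noteq> j"
    have "1 \<le> \<bar>real i - real j\<bar>" using \<open>i \<noteq> j\<close> by (cases "i < j") auto
    then have "2 * \<delta> * 1 \<le> 2 * \<delta> * \<bar>real i - real j\<bar>" using \<delta> by (intro mult_left_mono) auto
    also have "2 * \<delta> * \<bar>real i - real j\<bar> = \<bar>2 * real i * \<delta> - 2 * real j * \<delta>\<bar>"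
    proof -
      have "2 * real i * \<delta> - 2 * real j * \<delta> = 2 * \<delta> * (real i - real j)"
        by (simp add: algebra_simps)
      then show ?thesis using \<delta> by (simp add: abs_mult)
    qed
    finally have gap: "2 * \<delta> \<le> \<bar>2 * real i * \<delta> - 2 * real j * \<delta>\<bar>" by simp
    show "(+) (t i) ` E \<inter> (+) (t j) ` E = {}"
    proof (rule ccontr)
      assume "(+) (t i) ` E \<inter> (+) (t j) ` E \<noteq> {}"
      then obtain y where "y \<in> (+) (t i) ` E" "y \<in> (+) (t j) ` E" by blast
      from slab[OF this(1)] slab[OF this(2)] gap show False by linarith
    qed
  qed
  moreover have "(\<Union>k\<in>{..<N}. (+) (t k) ` E) \<subseteq> ball 0 (3*R)"
  proof clarify
    fix k y assume "k < N" "y \<in> E"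
    have "norm (t k + y) \<le> 2 * real k * \<delta> + norm y"
      using norm_triangle_ineq[of "t k" y] \<xi> \<delta> by (simp add: t_def)
    also have "\<dots> < 2 * (real N * \<delta>) + R"
      using \<open>k < N\<close> \<open>y \<in> E\<close> \<delta> by (intro add_le_less_mono) (auto simp: E_def)
    finally show "t k + y \<in> ball 0 (3*R)" using N by simp
  qed
  moreover have "E \<in> sets lebesgue"
    using slab_in_lmeasurable[of \<xi> c \<delta> 0 R] by (simp add: E_def Int_commute fmeasurable_def)
  ultimately show ?thesis
    using card_mult_emeasure_le_if_disjoint_translates[of E "ball 0 (3*R)" "{..<N}" t]
    by (simp add: E_def sets_completionI_sets)
qed

lemma emeasure_ball_slab_le:
  fixes \<xi> :: "'n::euclidean_space"
  assumes \<xi>: "norm \<xi> = 1" and R: "R > 0" and \<delta>: "\<delta> > 0"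
  shows "emeasure lebesgue (ball 0 R \<inter> {y. \<bar>y \<bullet> \<xi> - c\<bar> < \<delta>})
          \<le> ennreal (2 * measure lebesgue (ball (0::'n) (3*R)) / R * \<delta>)"
proof -
  define E where "E = ball 0 R \<inter> {y. \<bar>y \<bullet> \<xi> - c\<bar> < \<delta>}"
  define M where "M = measure lebesgue (ball (0::'n) (3*R))"
  have E: "E \<in> lmeasurable"
    using slab_in_lmeasurable[of \<xi> c \<delta> 0 R] unfolding E_def by (simp add: Int_commute)
  have M: "M \<ge> 0" "emeasure lebesgue (ball (0::'n) (3*R)) = ennreal M"
    unfolding M_def by (simp_all add: emeasure_eq_measure2)
  have "measure lebesgue E \<le> 2 * M / R * \<delta>"
  proof (cases "\<delta> \<ge> R")
    case True
    have "measure lebesgue E \<le> M"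
      unfolding M_def using R by (intro measure_mono_fmeasurable) (auto simp: E_def)
    also have "M \<le> 2 * M / R * \<delta>"
      using True R M by (simp add: field_simps mult_left_mono)
    finally show ?thesis .
  next
    case False
    define N where "N = nat \<lfloor>R / \<delta>\<rfloor>"
    have "1 \<le> R / \<delta>" using False \<delta> by simp
    then have "real N = of_int \<lfloor>R / \<delta>\<rfloor>" by (simp add: N_def)
    then have N: "1 \<le> real N" "real N \<le> R / \<delta>" "R / \<delta> < real N + 1"
      using \<open>1 \<le> R / \<delta>\<close> by (simp_all add: one_le_floor)
    then have N: "1 \<le> real N" "real N * \<delta> \<le> R" "R < (real N + 1) * \<delta>"
      using \<delta> by (simp_all add: field_simps)
    moreover have "(real N + 1) * \<delta> \<le> 2 * real N * \<delta>"
      using N \<delta> by (intro mult_right_mono) auto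
    ultimately have N: "1 \<le> real N" "real N * \<delta> \<le> R" "R < 2 * real N * \<delta>"
      by linarith+
    have "of_nat N * emeasure lebesgue E \<le> ennreal M"
      using card_mult_emeasure_ball_slab_le[OF \<xi> \<delta> N(2), of c] M unfolding E_def by simp
    then have "real N * measure lebesgue E \<le> M"
      using E M by (simp add: emeasure_eq_measure2 ennreal_of_nat_eq_real_of_nat ennreal_mult'[symmetric])
    then have "measure lebesgue E \<le> M / real N"
      using N by (simp add: field_simps)
    also have "\<dots> \<le> 2 * M / R * \<delta>"
      using N R M by (simp add: field_simps mult_left_mono)
    finally show ?thesis .
  qed
  then show ?thesis
    using E unfolding E_def[symmetric] M_def[symmetric] by (simp add: emeasure_eq_measure2 ennreal_leI)
qed

lemma emeasure_ball_le_card_mult_slab: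
  fixes \<xi> x :: "'n::euclidean_space"
  assumes \<xi>: "norm \<xi> = 1" and \<delta>: "\<delta> > 0" and N: "r/2 \<le> real N * \<delta>" "r/4 + real N * \<delta> \<le> r"
    and xc: "\<bar>x \<bullet> \<xi> - c\<bar> \<le> r/4"
  shows "emeasure lebesgue (ball x (r/4))
    \<le> of_nat (2*N) * emeasure lebesgue (ball x r \<inter> {y. c < y \<bullet> \<xi> \<and> y \<bullet> \<xi> \<le> c + \<delta>})"
proof -
  define E where "E = ball x r \<inter> {y. c < y \<bullet> \<xi> \<and> y \<bullet> \<xi> \<le> c + \<delta>}"
  have \<xi>\<xi>: "\<xi> \<bullet> \<xi> = 1" using \<xi> by (simp add: norm_eq_sqrt_inner)
  define J where "J = {- int N ..< int N}"
  define t where "t j = (real_of_int j * \<delta>) *\<^sub>R \<xi>" for j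
  have "ball x (r/4) \<subseteq> (\<Union>j\<in>J. (+) (t j) ` E)"
  proof
    fix y assume y: "y \<in> ball x (r/4)"
    define s where "s = y \<bullet> \<xi> - c"
    have "\<bar>y \<bullet> \<xi> - x \<bullet> \<xi>\<bar> \<le> norm (y - x)"
      using Cauchy_Schwarz_ineq2[of "y - x" \<xi>] \<xi> by (simp add: inner_diff_left)
    also have "\<dots> < r/4" using y by (simp add: dist_norm norm_minus_commute)
    finally have s: "\<bar>s\<bar> < r/2" using xc unfolding s_def by linarith
    define j where "j = \<lceil>s / \<delta>\<rceil> - 1"
    have j: "real_of_int j < s / \<delta>" "s / \<delta> \<le> real_of_int j + 1" unfolding j_def by linarith+
    then have js: "real_of_int j * \<delta> < s" "s \<le> (real_of_int j + 1) * \<delta>"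
      using \<delta> by (simp_all add: field_simps)
    have "- real N < s / \<delta>" "s / \<delta> < real N"
      using s N \<delta> by (auto simp: field_simps)
    then have "- int N < \<lceil>s / \<delta>\<rceil>" "\<lceil>s / \<delta>\<rceil> \<le> int N"
      by (simp_all add: less_ceiling_iff ceiling_le_iff)
    then have "j \<in> J" unfolding J_def j_def by auto
    then have "\<bar>real_of_int j * \<delta>\<bar> \<le> real N * \<delta>"
      using \<delta> by (auto simp: J_def abs_mult intro!: mult_right_mono)
    define y0 where "y0 = y - t j"
    have "norm (y0 - x) \<le> norm (y - x) + \<bar>real_of_int j * \<delta>\<bar>"
      using norm_triangle_ineq4[of "y - x" "t j"] \<xi> by (simp add: y0_def t_def algebra_simps)
    also have "\<dots> < r/4 + real N * \<delta>"
      using y \<open>\<bar>real_of_int j * \<delta>\<bar> \<le> _\<close> by (simp add: dist_norm norm_minus_commute)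
    finally have "y0 \<in> ball x r" using N by (simp add: dist_norm norm_minus_commute)
    moreover have "y0 \<bullet> \<xi> - c = s - real_of_int j * \<delta>"
      by (simp add: y0_def s_def t_def inner_diff_left \<xi>\<xi>)
    ultimately have "y0 \<in> E" using js by (auto simp: E_def algebra_simps)
    then show "y \<in> (\<Union>j\<in>J. (+) (t j) ` E)"
      using \<open>j \<in> J\<close> by (auto simp: y0_def intro!: bexI[of _ j] image_eqI[of _ _ y0])
  qed
  moreover have "E \<in> sets lebesgue"
  proof -
    have "open {y. c < y \<bullet> \<xi>}" "closed {y. y \<bullet> \<xi> \<le> c + \<delta>}"
      by (intro open_Collect_less closed_Collect_le continuous_intros)+
    then show ?thesis
      unfolding E_def by (auto simp: Collect_conj_eq intro!: sets_completionI_sets)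
  qed
  moreover have "finite J" "card J = 2*N" by (simp_all add: J_def)
  ultimately show ?thesis
    using emeasure_le_card_mult_if_covered_by_translates[of E J "ball x (r/4)" t]
    by (simp add: E_def J_def[symmetric])
qed

lemma emeasure_ball_slab_ge:
  fixes \<xi> x :: "'n::euclidean_space"
  assumes \<xi>: "norm \<xi> = 1" and r: "r > 0" and \<delta>: "\<delta> > 0" "\<delta> \<le> r/4"
    and xc: "\<bar>x \<bullet> \<xi> - c\<bar> \<le> r/4"
  shows "ennreal (measure lebesgue (ball x (r/4)) * (2*\<delta>/(3*r)))
          \<le> emeasure lebesgue (ball x r \<inter> {y. c < y \<bullet> \<xi> \<and> y \<bullet> \<xi> \<le> c + \<delta>})"
proof -
  define E where "E = ball x r \<inter> {y. c < y \<bullet> \<xi> \<and> y \<bullet> \<xi> \<le> c + \<delta>}"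
  define G where "G = measure lebesgue (ball x (r/4))"
  have Efin: "emeasure lebesgue E < \<infinity>"
    by (rule le_less_trans[OF emeasure_mono[of E "ball x r"]])
       (auto simp: E_def emeasure_eq_measure2 ennreal_less_top)
  define N where "N = nat \<lceil>r / (2*\<delta>)\<rceil>"
  have "2 \<le> r / (2*\<delta>)" using \<delta> by (simp add: field_simps)
  then have "real N = of_int \<lceil>r / (2*\<delta>)\<rceil>" by (simp add: N_def)
  then have "r / (2*\<delta>) \<le> real N" "real N < r / (2*\<delta>) + 1" by linarith+
  then have N: "r/2 \<le> real N * \<delta>" "r/4 + real N * \<delta> \<le> r" "2 * real N * (2*\<delta>) < 3*r"
    using \<delta> by (auto simp: field_simps)
  then have "0 < real N * \<delta>" using r by linarith
  then have "0 < real N" using \<delta> by (simp add: zero_less_mult_iff)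
  have "ennreal G \<le> ennreal (real (2*N) * measure lebesgue E)"
    using emeasure_ball_le_card_mult_slab[OF \<xi> \<delta>(1) N(1,2) xc] Efin
    by (simp add: G_def E_def emeasure_eq_ennreal_measure emeasure_eq_measure2
        ennreal_of_nat_eq_real_of_nat ennreal_mult')
  then have GE: "G \<le> real (2*N) * measure lebesgue E"
    by (subst (asm) ennreal_le_iff) auto
  have "2*\<delta>/(3*r) \<le> 1 / (2 * real N)" using N \<open>0 < real N\<close> \<delta> r by (simp add: field_simps)
  then have "G * (2*\<delta>/(3*r)) \<le> G * (1 / (2 * real N))"
    by (rule mult_left_mono) (simp add: G_def)
  also have "\<dots> \<le> measure lebesgue E"
    using GE \<open>0 < real N\<close> by (simp add: field_simps)
  finally show ?thesis
    unfolding E_def[symmetric] G_def[symmetric] using Efin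
    by (simp add: emeasure_eq_ennreal_measure ennreal_leI)
qed

subsection \<open>A profile with a dense set of poles\<close>

lemma ex_dyadic_interval:
  fixes t :: real
  assumes "0 < t" "t < 1"
  shows "\<exists>m. (1/2)^(Suc m) \<le> t \<and> t < (1/2)^m"
proof -
  obtain n where "(1/2::real)^n < t" using real_arch_pow_inv[of t "1/2"] assms by auto
  define m0 where "m0 = (LEAST k. (1/2::real)^k \<le> t)"
  have m0: "(1/2::real)^m0 \<le> t"
    unfolding m0_def by (rule LeastI[of _ n]) (use \<open>(1/2)^n < t\<close> in auto)
  then obtain m where m: "m0 = Suc m" using assms by (cases m0) auto
  have "\<not> (1/2::real)^m \<le> t"
    using Least_le[of "\<lambda>k. (1/2::real)^k \<le> t" m] m unfolding m0_def by auto
  then show ?thesis using m0 m by auto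
qed

lemma abs_powr_neg_le_dyadic:
  fixes s a :: real
  assumes "0 \<le> a"
  shows "\<bar>s\<bar> powr (-a) \<le> 1 \<or> (\<exists>m. \<bar>s\<bar> < (1/2)^m \<and> \<bar>s\<bar> powr (-a) \<le> 2 powr a * (2 powr a)^m)"
proof (cases "1 \<le> \<bar>s\<bar> \<or> s = 0")
  case True
  then show ?thesis
    using ge_one_powr_ge_zero[of "\<bar>s\<bar>" a] assms by (auto simp: powr_minus_divide)
next
  case False
  then obtain m where m: "(1/2)^(Suc m) \<le> \<bar>s\<bar>" "\<bar>s\<bar> < (1/2)^m"
    using ex_dyadic_interval[of "\<bar>s\<bar>"] by auto
  have "\<bar>s\<bar> powr (-a) \<le> ((1/2)^(Suc m)) powr (-a)"
    using m assms by (intro powr_mono2') auto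
  also have "((1/2::real)^(Suc m)) powr (-a) = 2 powr (real (Suc m) * a)"
  proof -
    have "(2::real) powr (- real (Suc m)) = 1 / 2 ^ Suc m"
      by (subst powr_minus_divide, subst powr_realpow) auto
    then have "(1/2::real)^(Suc m) = 2 powr (- real (Suc m))"
      by (simp add: power_one_over)
    then show ?thesis by (simp only: powr_powr mult_minus_left mult_minus_right minus_minus)
  qed
  also have "\<dots> = 2 powr a * (2 powr a)^m"
    by (simp add: powr_add[symmetric] powr_power algebra_simps)
  finally show ?thesis using m by blast
qed

lemma abs_powr_neg_indicator_le_dyadic_sum:
  fixes f :: "'a \<Rightarrow> real"
  assumes "0 \<le> a"
  shows "ennreal (\<bar>f y\<bar> powr (-a)) * indicator S y
    \<le> indicator S y + (\<Sum>m. ennreal (2 powr a * (2 powr a)^m) * indicator (S \<inter> {y. \<bar>f y\<bar> < (1/2)^m}) y)"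
proof (cases "y \<in> S")
  case True
  consider "\<bar>f y\<bar> powr (-a) \<le> 1"
    | m where "\<bar>f y\<bar> < (1/2)^m" "\<bar>f y\<bar> powr (-a) \<le> 2 powr a * (2 powr a)^m"
    using abs_powr_neg_le_dyadic[OF assms, of "f y"] by blast
  then show ?thesis
  proof cases
    case 1
    then show ?thesis using True by (intro add_increasing2) (auto simp: ennreal_leI)
  next
    case (2 m)
    define g where "g m = ennreal (2 powr a * (2 powr a)^m) * indicator (S \<inter> {y. \<bar>f y\<bar> < (1/2)^m}) y" for m
    have "ennreal (\<bar>f y\<bar> powr (-a)) * indicator S y \<le> g m"
      using 2 True by (simp add: g_def ennreal_leI)
    also have "g m \<le> (\<Sum>m. g m)"
      using sum_le_suminf[OF summableI, of "{m}" g] by simp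
    finally show ?thesis unfolding g_def by (intro add_increasing) auto
  qed
qed simp

lemma suminf_ennreal_geometric:
  fixes c \<rho> :: real
  assumes "0 \<le> c" "0 \<le> \<rho>" "\<rho> < 1"
  shows "(\<Sum>m. ennreal (c * \<rho>^m)) = ennreal (c / (1 - \<rho>))"
proof -
  have "(\<Sum>m. ennreal (c * \<rho>^m)) = ennreal (\<Sum>m. c * \<rho>^m)"
    using assms by (intro suminf_ennreal2) (auto intro!: summable_mult summable_geometric)
  also have "(\<Sum>m. c * \<rho>^m) = c / (1 - \<rho>)"
    using assms by (subst suminf_mult) (auto simp: suminf_geometric summable_geometric)
  finally show ?thesis .
qed

text \<open>Dyadically, \<open>\<bar>s\<bar>\<^sup>-\<^sup>a \<le> 1 + \<Sum>\<^sub>m 2\<^sup>a\<^sup>(\<^sup>m\<^sup>+\<^sup>1\<^sup>) [\<bar>s\<bar> < 2\<^sup>-\<^sup>m]\<close>; the slabs have measure \<open>O(2\<^sup>-\<^sup>m)\<close>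
  uniformly in \<open>c\<close>, and \<open>\<Sum>\<^sub>m 2\<^sup>(\<^sup>a\<^sup>-\<^sup>1\<^sup>)\<^sup>m < \<infinity>\<close> because \<open>a < 1\<close>.\<close>
lemma nn_integral_ball_slab_singularity_bounded:
  fixes \<xi> :: "'n::euclidean_space"
  assumes \<xi>: "norm \<xi> = 1" and R: "R > 0" and a: "0 < a" "a < 1"
  obtains C where "\<And>c. (\<integral>\<^sup>+y. ennreal (\<bar>y \<bullet> \<xi> - c\<bar> powr (-a)) * indicator (ball 0 R) y \<partial>lebesgue) \<le> ennreal C"
proof
  define K where "K = 2 * measure lebesgue (ball (0::'n) (3*R)) / R"
  define \<rho> where "\<rho> = 2 powr a / 2"
  have K: "K \<ge> 0" unfolding K_def using R by simp
  have \<rho>: "0 < \<rho>" "\<rho> < 1" unfolding \<rho>_def using a powr_less_mono[of a 1 2] by auto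
  fix c
  define S where "S m = ball (0::'n) R \<inter> {y. \<bar>y \<bullet> \<xi> - c\<bar> < (1/2)^m}" for m
  have S: "S m \<in> sets lebesgue" for m
    using slab_in_lmeasurable[of \<xi> c "(1/2)^m" 0 R] by (simp add: S_def Int_commute fmeasurable_def)
  have ball: "ball (0::'n) R \<in> sets lebesgue" by (simp add: sets_completionI_sets)
  have "(\<integral>\<^sup>+y. ennreal (\<bar>y \<bullet> \<xi> - c\<bar> powr (-a)) * indicator (ball 0 R) y \<partial>lebesgue)
      \<le> (\<integral>\<^sup>+y. indicator (ball 0 R) y + (\<Sum>m. ennreal (2 powr a * (2 powr a)^m) * indicator (S m) y) \<partial>lebesgue)"
    unfolding S_def using a by (intro nn_integral_mono abs_powr_neg_indicator_le_dyadic_sum) simp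
  also have "\<dots> = emeasure lebesgue (ball (0::'n) R)
      + (\<Sum>m. ennreal (2 powr a * (2 powr a)^m) * emeasure lebesgue (S m))"
  proof -
    have terms: "(\<lambda>y. ennreal (2 powr a * (2 powr a)^m) * indicator (S m) y) \<in> borel_measurable lebesgue" for m
      using S[of m] by measurable
    have "(\<lambda>y. indicator (ball (0::'n) R) y :: ennreal) \<in> borel_measurable lebesgue"
      using ball by measurable
    moreover have "(\<lambda>y. \<Sum>m. ennreal (2 powr a * (2 powr a)^m) * indicator (S m) y) \<in> borel_measurable lebesgue"
      using terms by (rule borel_measurable_suminf_order)
    ultimately show ?thesis
      by (simp only: nn_integral_add nn_integral_suminf[OF terms] nn_integral_cmult_indicator[OF S]
          nn_integral_indicator[OF ball])
  qed
  also have "\<dots> \<le> ennreal (measure lebesgue (ball (0::'n) R)) + (\<Sum>m. ennreal (2 powr a * K * \<rho>^m))"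
  proof (intro add_mono suminf_le)
    fix m
    have "emeasure lebesgue (S m) \<le> ennreal (K * (1/2)^m)"
      unfolding S_def K_def using emeasure_ball_slab_le[OF \<xi> R, of "(1/2)^m" c] by simp
    then have "ennreal (2 powr a * (2 powr a)^m) * emeasure lebesgue (S m)
        \<le> ennreal (2 powr a * (2 powr a)^m) * ennreal (K * (1/2)^m)"
      by (rule mult_left_mono) simp
    also have "\<dots> = ennreal (2 powr a * K * \<rho>^m)"
      by (simp add: ennreal_mult'[symmetric] \<rho>_def power_divide K field_simps)
    finally show "ennreal (2 powr a * (2 powr a)^m) * emeasure lebesgue (S m) \<le> ennreal (2 powr a * K * \<rho>^m)" .
  qed (auto simp: emeasure_eq_measure2)
  also have "(\<Sum>m. ennreal (2 powr a * K * \<rho>^m)) = ennreal (2 powr a * K / (1 - \<rho>))"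
    using K \<rho> by (intro suminf_ennreal_geometric) auto
  finally show "(\<integral>\<^sup>+y. ennreal (\<bar>y \<bullet> \<xi> - c\<bar> powr (-a)) * indicator (ball 0 R) y \<partial>lebesgue)
      \<le> ennreal (measure lebesgue (ball (0::'n) R) + 2 powr a * K / (1 - \<rho>))"
    using K \<rho> by (simp add: ennreal_plus)
qed

lemma ball_in_borel[measurable]: "ball (c::'a::metric_space) r \<in> sets borel"
  by simp

definition rat_seq :: "nat \<Rightarrow> real" where
  "rat_seq = from_nat_into \<rat>"

lemma rat_seq_dense:
  assumes "e > 0"
  obtains k where "\<bar>z - rat_seq k\<bar> < e"
proof -
  obtain v where v: "v \<in> \<rat>" "z - e < v" "v < z + e"
    using Rats_dense_in_real[of "z - e" "z + e"] assms by auto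
  obtain k where "rat_seq k = v"
    using from_nat_into_surj[OF countable_rat v(1)] by (auto simp: rat_seq_def)
  with v show ?thesis by (intro that[of k]) auto
qed

text \<open>The profile \<open>F\<^sub>a(s) = \<Sum>\<^sub>k 2\<^sup>-\<^sup>k \<bar>s - q\<^sub>k\<bar>\<^sup>-\<^sup>a\<close>, with poles at all rationals \<open>q\<^sub>k\<close>.
  (At a pole itself the summand is \<open>0 powr -a = 0\<close>; this null set is irrelevant.)\<close>
definition rational_singularities :: "real \<Rightarrow> real \<Rightarrow> ennreal" where
  "rational_singularities a s = (\<Sum>k. ennreal ((1/2)^k * \<bar>s - rat_seq k\<bar> powr (-a)))"

lemma borel_measurable_rational_singularities[measurable]:
  "rational_singularities a \<in> borel_measurable borel"
  unfolding rational_singularities_def by measurable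

lemma enn2real_rational_singularities_ge:
  assumes "rational_singularities a s \<noteq> \<infinity>"
  shows "(1/2)^k * \<bar>s - rat_seq k\<bar> powr (-a) \<le> enn2real (rational_singularities a s)"
proof -
  define f where "f k = ennreal ((1/2)^k * \<bar>s - rat_seq k\<bar> powr (-a))" for k
  have "(\<Sum>i\<in>{k}. f i) \<le> (\<Sum>i. f i)" by (rule sum_le_suminf[OF summableI]) auto
  then have "enn2real (f k) \<le> enn2real (rational_singularities a s)"
    using assms unfolding rational_singularities_def f_def by (intro enn2real_mono) (auto simp: less_top)
  then show ?thesis unfolding f_def by simp
qed

lemma nn_integral_ball_rational_singularities_finite:
  fixes \<xi> :: "'n::euclidean_space"
  assumes \<xi>: "norm \<xi> = 1" and R: "R > 0" and a: "0 < a" "a < 1"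
  shows "(\<integral>\<^sup>+y. rational_singularities a (y \<bullet> \<xi>) * indicator (ball 0 R) y \<partial>lebesgue) < \<infinity>"
proof -
  obtain C where C: "\<And>c. (\<integral>\<^sup>+y. ennreal (\<bar>y \<bullet> \<xi> - c\<bar> powr (-a)) * indicator (ball 0 R) y \<partial>lebesgue) \<le> ennreal C"
    using nn_integral_ball_slab_singularity_bounded[OF \<xi> R a] by blast
  have meas: "(\<lambda>y. ennreal (\<bar>y \<bullet> \<xi> - rat_seq k\<bar> powr (-a)) * indicator (ball 0 R) y) \<in> borel_measurable lebesgue" for k
    by (rule measurable_completion) measurable
  have "(\<integral>\<^sup>+y. rational_singularities a (y \<bullet> \<xi>) * indicator (ball 0 R) y \<partial>lebesgue)
      = (\<integral>\<^sup>+y. (\<Sum>k. ennreal ((1/2)^k * \<bar>y \<bullet> \<xi> - rat_seq k\<bar> powr (-a)) * indicator (ball 0 R) y) \<partial>lebesgue)"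
    unfolding rational_singularities_def by simp
  also have "\<dots> = (\<Sum>k. \<integral>\<^sup>+y. ennreal ((1/2)^k) * (ennreal (\<bar>y \<bullet> \<xi> - rat_seq k\<bar> powr (-a)) * indicator (ball 0 R) y) \<partial>lebesgue)"
    by (subst nn_integral_suminf) (auto intro: measurable_completion simp: ennreal_mult mult.assoc)
  also have "\<dots> = (\<Sum>k. ennreal ((1/2)^k) * \<integral>\<^sup>+y. ennreal (\<bar>y \<bullet> \<xi> - rat_seq k\<bar> powr (-a)) * indicator (ball 0 R) y \<partial>lebesgue)"
    using meas by (simp add: nn_integral_cmult)
  also have "\<dots> \<le> (\<Sum>k. ennreal ((1/2)^k) * ennreal C)"
    by (intro suminf_le mult_left_mono C) auto
  also have "\<dots> = ennreal 2 * ennreal C"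
  proof -
    have "(\<Sum>k. ennreal ((1/2::real)^k)) = ennreal (\<Sum>k. (1/2::real)^k)"
      by (rule suminf_ennreal2) (auto simp: summable_geometric)
    also have "(\<Sum>k. (1/2::real)^k) = 2" using suminf_geometric[of "1/2::real"] by simp
    finally show ?thesis by (simp add: ennreal_suminf_multc)
  qed
  also have "\<dots> < \<infinity>" by (simp add: ennreal_mult_less_top)
  finally show ?thesis .
qed

lemma AE_rational_singularities_finite:
  fixes \<xi> :: "'n::euclidean_space"
  assumes \<xi>: "norm \<xi> = 1" and a: "0 < a" "a < 1"
  shows "AE y in lebesgue. rational_singularities a (y \<bullet> \<xi>) \<noteq> \<infinity>"
proof -
  have "AE y in lebesgue. rational_singularities a (y \<bullet> \<xi>) * indicator (ball 0 (Suc n)) y \<noteq> \<infinity>" for n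
  proof (rule nn_integral_PInf_AE)
    show "(\<lambda>y. rational_singularities a (y \<bullet> \<xi>) * indicator (ball 0 (Suc n)) y) \<in> borel_measurable lebesgue"
      by (rule measurable_completion) measurable
  qed (use nn_integral_ball_rational_singularities_finite[OF \<xi> _ a, of "Suc n"] in auto)
  then have "AE y in lebesgue. \<forall>n. rational_singularities a (y \<bullet> \<xi>) * indicator (ball 0 (Suc n)) y \<noteq> \<infinity>"
    by (simp only: AE_all_countable) blast
  then show ?thesis
  proof (rule eventually_mono)
    fix y assume y: "\<forall>n. rational_singularities a (y \<bullet> \<xi>) * indicator (ball 0 (Suc n)) y \<noteq> \<infinity>"
    obtain n where "norm y < real (Suc n)"
      using reals_Archimedean2[of "norm y"] by (metis less_Suc_eq of_nat_less_iff order_less_trans)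
    with y[rule_format, of n] show "rational_singularities a (y \<bullet> \<xi>) \<noteq> \<infinity>" by simp
  qed
qed

lemma integrable_indicator_rational_singularities:
  fixes \<xi> :: "'n::euclidean_space"
  assumes \<xi>: "norm \<xi> = 1" and a: "0 < a" "a < 1" and K: "compact K"
  shows "integrable lborel (\<lambda>y. indicator K y * enn2real (rational_singularities a (y \<bullet> \<xi>)))"
proof (rule integrableI_bounded)
  obtain R where R: "R > 0" "K \<subseteq> ball 0 R"
    using compact_imp_bounded[OF K] bounded_subset_ballD by blast
  have [measurable]: "K \<in> sets borel" using K by (intro borel_closed compact_imp_closed)
  show "(\<lambda>y. indicator K y * enn2real (rational_singularities a (y \<bullet> \<xi>))) \<in> borel_measurable lborel"
    by measurable
  have "(\<integral>\<^sup>+y. ennreal (norm (indicator K y * enn2real (rational_singularities a (y \<bullet> \<xi>)))) \<partial>lborel)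
      \<le> (\<integral>\<^sup>+y. rational_singularities a (y \<bullet> \<xi>) * indicator (ball 0 R) y \<partial>lborel)"
    using R by (intro nn_integral_mono) (auto simp: indicator_def ennreal_enn2real_if)
  also have "\<dots> = (\<integral>\<^sup>+y. rational_singularities a (y \<bullet> \<xi>) * indicator (ball 0 R) y \<partial>lebesgue)"
    by (simp add: nn_integral_completion)
  also have "\<dots> < \<infinity>" by (rule nn_integral_ball_rational_singularities_finite[OF \<xi> R(1) a])
  finally show "(\<integral>\<^sup>+y. ennreal (norm (indicator K y * enn2real (rational_singularities a (y \<bullet> \<xi>)))) \<partial>lborel) < \<infinity>" .
qed

subsection \<open>Infinite Lorentz norms\<close>

lemma ennreal_eq_top_if_unbounded:
  assumes "\<And>N::real. ennreal N \<le> x"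
  shows "x = top"
proof (cases x rule: ennreal_cases)
  case (real r)
  with assms[of "r + 1"] show ?thesis by (simp add: ennreal_le_iff)
qed simp

lemma distr_fun_less_top:
  assumes "\<Omega> \<in> sets lebesgue" "emeasure lebesgue \<Omega> < \<infinity>"
  shows "distr_fun \<Omega> g t < \<infinity>"
  using emeasure_mono[of "{x \<in> \<Omega>. norm (g x) > t}" \<Omega> lebesgue] assms
  unfolding distr_fun_def by auto

lemma distr_fun_antimono:
  fixes \<Omega> :: "'n::euclidean_space set" and g :: "'n \<Rightarrow> 'v::real_normed_vector"
  assumes "\<Omega> \<in> sets lebesgue" "g \<in> borel_measurable lebesgue" "s \<le> t"
  shows "distr_fun \<Omega> g t \<le> distr_fun \<Omega> g s"
proof -
  have "{x \<in> \<Omega>. norm (g x) > s} = \<Omega> \<inter> ((\<lambda>x. norm (g x)) -` {s<..} \<inter> space lebesgue)"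
    by auto
  also have "\<dots> \<in> sets lebesgue"
    using assms by (intro sets.Int measurable_sets[of _ lebesgue borel]) auto
  finally show ?thesis
    unfolding distr_fun_def using assms(3) by (intro emeasure_mono) auto
qed

lemma SUP_weak_lorentz_integrand_eq_top:
  fixes m :: "real \<Rightarrow> ennreal"
  assumes fin: "\<And>t. m t \<noteq> top" and big: "\<And>N. \<exists>t>0. N \<le> t * enn2real (m t) powr (1/p)"
  shows "(SUP t\<in>{0<..}. (if m t = top then top else ennreal (t * enn2real (m t) powr (1/p)))) = top"
proof (rule ennreal_eq_top_if_unbounded)
  fix N :: real
  obtain t where t: "t > 0" "N \<le> t * enn2real (m t) powr (1/p)" using big[of N] by blast
  then have "ennreal N \<le> (if m t = top then top else ennreal (t * enn2real (m t) powr (1/p)))"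
    using fin by (simp add: ennreal_leI)
  also have "\<dots> \<le> (SUP t\<in>{0<..}. (if m t = top then top else ennreal (t * enn2real (m t) powr (1/p))))"
    using t(1) by (intro SUP_upper) auto
  finally show "ennreal N \<le> \<dots>" .
qed

text \<open>If \<open>t\<^sub>0 m(t\<^sub>0)\<^sup>1\<^sup>/\<^sup>p \<ge> N\<close>, then by monotonicity the integrand is at least \<open>N/(2t\<^sub>0)\<close> on \<open>[t\<^sub>0/2, t\<^sub>0]\<close>.\<close>
lemma nn_integral_lorentz_integrand_eq_top:
  fixes m :: "real \<Rightarrow> ennreal"
  assumes fin: "\<And>t. m t \<noteq> top" and mono: "\<And>s t. s \<le> t \<Longrightarrow> m t \<le> m s"
    and big: "\<And>N. \<exists>t>0. N \<le> t * enn2real (m t) powr (1/p)"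
    and p: "p > 0" and q: "1 \<le> q"
  shows "(\<integral>\<^sup>+ t\<in>{0<..}. (if m t = top then top
            else ennreal ((t * enn2real (m t) powr (1/p)) powr q / t)) \<partial>lborel) = top"
proof (rule ennreal_eq_top_if_unbounded)
  fix N0 :: real
  define D where "D t = enn2real (m t)" for t
  have D: "D t \<le> D s" if "s \<le> t" for s t
    unfolding D_def using mono[OF that] fin by (simp add: enn2real_mono less_top)
  define N where "N = max 2 (4 * N0)"
  have N: "N \<ge> 2" unfolding N_def by simp
  obtain t0 where t0: "t0 > 0" "N \<le> t0 * D t0 powr (1/p)" using big[of N] unfolding D_def by blast
  have pointwise: "ennreal (N / (2*t0)) * indicator {t0/2..t0} t
      \<le> (if m t = top then top else ennreal ((t * enn2real (m t) powr (1/p)) powr q / t)) * indicator {0<..} t" for t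
  proof (cases "t \<in> {t0/2..t0}")
    case True
    then have t: "t > 0" "t0/2 \<le> t" "t \<le> t0" using t0 by auto
    have "D t0 powr (1/p) \<le> D t powr (1/p)"
      using D[of t t0] t p by (intro powr_mono2) (auto simp: D_def)
    then have "(t0/2) * D t0 powr (1/p) \<le> t * D t powr (1/p)"
      using t by (intro mult_mono) auto
    then have "N/2 \<le> t * D t powr (1/p)" using t0 by simp
    have "N/2 = (N/2) powr 1" using N by simp
    also have "\<dots> \<le> (N/2) powr q" using N q by (intro powr_mono) auto
    also have "\<dots> \<le> (t * D t powr (1/p)) powr q"
      using \<open>N/2 \<le> t * D t powr (1/p)\<close> N q by (intro powr_mono2) auto
    finally have "N/2 \<le> (t * D t powr (1/p)) powr q" .
    moreover have "N / (2*t0) \<le> (N/2) / t"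
      using t t0 N by (simp add: field_simps mult_left_mono)
    ultimately have "N / (2*t0) \<le> (t * D t powr (1/p)) powr q / t"
      using t by (smt (verit) divide_right_mono)
    then show ?thesis using t fin True by (simp add: D_def ennreal_leI)
  qed simp
  have "ennreal N0 \<le> ennreal (N / (2*t0)) * ennreal (t0/2)"
    using t0 by (simp add: ennreal_mult'[symmetric] N_def ennreal_leI)
  also have "\<dots> = (\<integral>\<^sup>+ t. ennreal (N / (2*t0)) * indicator {t0/2..t0} t \<partial>lborel)"
    using t0 by (simp add: nn_integral_cmult_indicator)
  also have "\<dots> \<le> (\<integral>\<^sup>+ t\<in>{0<..}. (if m t = top then top
            else ennreal ((t * enn2real (m t) powr (1/p)) powr q / t)) \<partial>lborel)"
    by (rule nn_integral_mono) (rule pointwise)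
  finally show "ennreal N0 \<le> \<dots>" .
qed

lemma lorentz_norm_eq_top_if_not_weak_Lp:
  fixes \<Omega> :: "'n::euclidean_space set" and g :: "'n \<Rightarrow> 'v::real_normed_vector"
  assumes \<Omega>: "\<Omega> \<in> sets lebesgue" "emeasure lebesgue \<Omega> < \<infinity>" and g: "g \<in> borel_measurable lebesgue"
    and big: "\<And>N. \<exists>t>0. N \<le> t * enn2real (distr_fun \<Omega> g t) powr (1/p)"
    and p: "p > 0" and q: "1 \<le> q"
  shows "lorentz_norm p q \<Omega> g = top"
proof -
  have fin: "distr_fun \<Omega> g t \<noteq> top" for t
    using distr_fun_less_top[OF \<Omega>, of g t] by simp
  note mono = distr_fun_antimono[OF \<Omega>(1) g]
  show ?thesis
  proof (cases "q = top")
    case True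
    then show ?thesis
      using SUP_weak_lorentz_integrand_eq_top[OF fin big] unfolding lorentz_norm_def by simp
  next
    case False
    then have "1 \<le> enn2real q"
      using q by (metis enn2real_ennreal enn2real_mono ennreal_1 less_top zero_le_one)
    then show ?thesis
      using False nn_integral_lorentz_integrand_eq_top[OF fin mono big p]
      unfolding lorentz_norm_def by (simp add: Let_def)
  qed
qed

lemma mult_powr_decay_ge:
  fixes \<kappa> \<beta> p a C t :: real
  assumes \<kappa>: "\<kappa> > 0" and \<beta>: "\<beta> > 0" and p: "p > 0" and a: "a > 0" and C: "C \<ge> 0" and t: "t \<ge> C + 1"
  shows "\<kappa> powr (1/p) * (\<beta>/2) powr (1/(a*p)) * t powr (1 - 1/(a*p))
    \<le> t * (\<kappa> * (\<beta>/(t + C + 1)) powr (1/a)) powr (1/p)"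
proof -
  define \<gamma> where "\<gamma> = 1/(a*p)"
  define T where "T = t + C + 1"
  have t0: "t > 0" and T: "T > 0" "T \<le> 2*t" unfolding T_def using t C by auto
  have "\<kappa> powr (1/p) * (\<beta>/2) powr \<gamma> * t powr (1 - \<gamma>) = t * (\<kappa> powr (1/p) * (\<beta>/(2*t)) powr \<gamma>)"
    using \<beta> t0 by (simp add: powr_diff powr_divide powr_mult field_simps)
  also have "\<dots> \<le> t * (\<kappa> powr (1/p) * (\<beta>/T) powr \<gamma>)"
    using T \<beta> t0 a p by (intro mult_left_mono powr_mono2) (auto simp: \<gamma>_def frac_le)
  also have "\<kappa> powr (1/p) * (\<beta>/T) powr \<gamma> = (\<kappa> * (\<beta>/T) powr (1/a)) powr (1/p)"
    using \<kappa> \<beta> T by (simp add: powr_mult powr_powr \<gamma>_def)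
  finally show ?thesis unfolding \<gamma>_def T_def .
qed

lemma ex_threshold_le_mult_powr_decay:
  fixes \<kappa> \<beta> p a C N :: real
  assumes \<kappa>: "\<kappa> > 0" and \<beta>: "\<beta> > 0" and p: "p > 0" and a: "a > 0" and ap: "1/(a*p) < 1" and C: "C \<ge> 0"
  shows "\<exists>t0. \<forall>t\<ge>t0. N \<le> t * (\<kappa> * (\<beta>/(t + C + 1)) powr (1/a)) powr (1/p)"
proof -
  define \<gamma> where "\<gamma> = 1/(a*p)"
  have \<gamma>: "0 < \<gamma>" "\<gamma> < 1" unfolding \<gamma>_def using a p ap by auto
  define c where "c = \<kappa> powr (1/p) * (\<beta>/2) powr \<gamma>"
  have c: "c > 0" unfolding c_def using \<kappa> \<beta> by simp
  define N' where "N' = max N 1"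
  have "N \<le> t * (\<kappa> * (\<beta>/(t + C + 1)) powr (1/a)) powr (1/p)"
    if t: "t \<ge> max (C+1) ((N'/c) powr (1/(1-\<gamma>)))" for t
  proof -
    have "N'/c = ((N'/c) powr (1/(1-\<gamma>))) powr (1-\<gamma>)"
      using \<gamma> c by (simp add: powr_powr N'_def)
    also have "\<dots> \<le> t powr (1-\<gamma>)"
      using t \<gamma> by (intro powr_mono2) auto
    finally have "N' \<le> c * t powr (1-\<gamma>)" using c by (simp add: field_simps)
    also have "\<dots> \<le> t * (\<kappa> * (\<beta>/(t + C + 1)) powr (1/a)) powr (1/p)"
      using mult_powr_decay_ge[OF \<kappa> \<beta> p a C, of t] t unfolding c_def \<gamma>_def by simp
    finally show ?thesis unfolding N'_def by linarith
  qed
  then show ?thesis by blast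
qed

lemma distr_fun_singular_minus_bounded_ge:
  fixes \<xi> x :: "'n::euclidean_space" and w :: "'v::euclidean_space" and P :: "'n \<Rightarrow> 'v"
  assumes \<xi>: "norm \<xi> = 1" and a: "0 < a" "a < 1" and r: "r > 0"
    and P: "P \<in> borel_measurable lebesgue" "\<And>y. y \<in> ball x r \<Longrightarrow> norm (P y) \<le> C"
    and k: "\<bar>x \<bullet> \<xi> - rat_seq k\<bar> \<le> r/4" and \<delta>: "0 < \<delta>" "\<delta> \<le> r/4"
  shows "ennreal (measure lebesgue (ball x (r/4)) * (2*\<delta>/(3*r)))
    \<le> distr_fun (ball x r) (\<lambda>y. enn2real (rational_singularities a (y \<bullet> \<xi>)) *\<^sub>R w - P y)
         ((1/2)^k * norm w * \<delta> powr (-a) - C - 1)"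
proof -
  define c where "c = rat_seq k"
  define g where "g y = enn2real (rational_singularities a (y \<bullet> \<xi>)) *\<^sub>R w - P y" for y
  define t where "t = (1/2)^k * norm w * \<delta> powr (-a) - C - 1"
  have "(\<lambda>y. enn2real (rational_singularities a (y \<bullet> \<xi>))) \<in> borel_measurable lebesgue"
    by (rule measurable_completion) measurable
  then have g: "g \<in> borel_measurable lebesgue"
    unfolding g_def using P(1) by (intro borel_measurable_diff borel_measurable_scaleR borel_measurable_const)
  have "ball x r \<inter> ((\<lambda>y. norm (g y)) -` {t<..} \<inter> space lebesgue) \<in> sets lebesgue"
    using measurable_sets[OF measurable_compose[OF g borel_measurable_norm], of "{t<..}"]
    by (intro sets.Int) (auto simp: sets_completionI_sets)
  moreover have "ball x r \<inter> ((\<lambda>y. norm (g y)) -` {t<..} \<inter> space lebesgue) = {y \<in> ball x r. norm (g y) > t}"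
    by auto
  ultimately have level: "{y \<in> ball x r. norm (g y) > t} \<in> sets lebesgue" by simp
  have "AE y in lebesgue. y \<in> ball x r \<inter> {y. c < y \<bullet> \<xi> \<and> y \<bullet> \<xi> \<le> c + \<delta>} \<longrightarrow> norm (g y) > t"
    using AE_rational_singularities_finite[OF \<xi> a]
  proof eventually_elim
    case (elim y)
    show ?case
    proof
      assume y: "y \<in> ball x r \<inter> {y. c < y \<bullet> \<xi> \<and> y \<bullet> \<xi> \<le> c + \<delta>}"
      \<comment> \<open>The k-th pole alone forces \<open>\<bar>u(y)\<bar>\<close> to be at least \<open>2\<^sup>-\<^sup>k \<delta>\<^sup>-\<^sup>a \<bar>w\<bar>\<close> in the slab.\<close>
      have "\<delta> powr (-a) \<le> \<bar>y \<bullet> \<xi> - c\<bar> powr (-a)"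
        using y a by (intro powr_mono2') auto
      then have "(1/2)^k * \<delta> powr (-a) \<le> (1/2)^k * \<bar>y \<bullet> \<xi> - c\<bar> powr (-a)" by simp
      also have "\<dots> \<le> enn2real (rational_singularities a (y \<bullet> \<xi>))"
        using enn2real_rational_singularities_ge[OF elim] unfolding c_def .
      finally have "(1/2)^k * \<delta> powr (-a) \<le> enn2real (rational_singularities a (y \<bullet> \<xi>))" .
      then have "(1/2)^k * \<delta> powr (-a) * norm w \<le> enn2real (rational_singularities a (y \<bullet> \<xi>)) * norm w"
        by (rule mult_right_mono) simp
      then have "(1/2)^k * norm w * \<delta> powr (-a) \<le> norm (enn2real (rational_singularities a (y \<bullet> \<xi>)) *\<^sub>R w)"
        by (simp add: algebra_simps)
      moreover have "norm (enn2real (rational_singularities a (y \<bullet> \<xi>)) *\<^sub>R w) - norm (P y) \<le> norm (g y)"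
        unfolding g_def by (rule norm_triangle_ineq2)
      moreover have "norm (P y) \<le> C" using P(2) y by blast
      ultimately show "norm (g y) > t" unfolding t_def by linarith
    qed
  qed
  then have "emeasure lebesgue (ball x r \<inter> {y. c < y \<bullet> \<xi> \<and> y \<bullet> \<xi> \<le> c + \<delta>}) \<le> distr_fun (ball x r) g t"
    unfolding distr_fun_def by (intro emeasure_mono_AE level) auto
  then show ?thesis
    using emeasure_ball_slab_ge[OF \<xi> r \<delta> k[folded c_def]] unfolding g_def t_def by simp
qed

lemma powr_level_solution:
  fixes \<beta> a \<rho> T :: real
  assumes \<beta>: "0 < \<beta>" and a: "0 < a" and \<rho>: "0 < \<rho>" and T: "\<beta> / \<rho> powr a \<le> T"
  defines "\<delta> \<equiv> (\<beta>/T) powr (1/a)"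
  shows "0 < \<delta>" "\<delta> \<le> \<rho>" "\<beta> * \<delta> powr (-a) = T"
proof -
  have T0: "0 < T" using \<beta> \<rho> T by (smt (verit) divide_pos_pos powr_gt_zero)
  then show "0 < \<delta>" unfolding \<delta>_def using \<beta> by simp
  have "\<beta>/T \<le> \<beta> / (\<beta> / \<rho> powr a)"
    using \<beta> \<rho> T T0 by (intro divide_left_mono) auto
  also have "\<dots> = \<rho> powr a" using \<beta> by simp
  finally have "\<delta> \<le> (\<rho> powr a) powr (1/a)"
    unfolding \<delta>_def using \<beta> T0 a by (intro powr_mono2) auto
  then show "\<delta> \<le> \<rho>" using \<rho> a by (simp add: powr_powr)
  have "\<delta> powr (-a) = (\<beta>/T) powr (1/a * -a)" unfolding \<delta>_def by (simp add: powr_powr)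
  also have "1/a * -a = -1" using a by simp
  finally show "\<beta> * \<delta> powr (-a) = T" using \<beta> T0 by (simp add: powr_minus_divide)
qed

text \<open>With \<open>\<delta> = \<delta>(t)\<close> chosen so that the \<open>k\<close>-th pole exceeds \<open>t + C + 1\<close> on a slab of width \<open>\<delta>\<close>,
  the distribution function at \<open>t\<close> is at least \<open>\<kappa>\<delta> \<sim> t\<^sup>-\<^sup>1\<^sup>/\<^sup>a\<close>; as \<open>a > 1/p\<close>, \<open>t \<lambda>(t)\<^sup>1\<^sup>/\<^sup>p \<rightarrow> \<infinity>\<close>.\<close>
lemma lorentz_norm_singular_minus_bounded_eq_top:
  fixes \<xi> x :: "'n::euclidean_space" and w :: "'v::euclidean_space" and P :: "'n \<Rightarrow> 'v"
  assumes \<xi>: "norm \<xi> = 1" and w: "w \<noteq> 0" and p: "p > 1" and a: "1/p < a" "a < 1" and r: "r > 0"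
    and P: "P \<in> borel_measurable lebesgue" "\<And>y. y \<in> ball x r \<Longrightarrow> norm (P y) \<le> C" and q: "1 \<le> q"
  shows "lorentz_norm p q (ball x r) (\<lambda>y. enn2real (rational_singularities a (y \<bullet> \<xi>)) *\<^sub>R w - P y) = top"
proof (rule lorentz_norm_eq_top_if_not_weak_Lp)
  define g where "g = (\<lambda>y. enn2real (rational_singularities a (y \<bullet> \<xi>)) *\<^sub>R w - P y)"
  have a0: "0 < a" using a p by (smt (verit) divide_pos_pos)
  have C: "0 \<le> C" using P(2)[of x] r by (smt (verit) centre_in_ball norm_ge_zero)
  have "(\<lambda>y. enn2real (rational_singularities a (y \<bullet> \<xi>))) \<in> borel_measurable lebesgue"
    by (rule measurable_completion) measurable
  then show "g \<in> borel_measurable lebesgue"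
    unfolding g_def using P(1) by (intro borel_measurable_diff borel_measurable_scaleR borel_measurable_const)
  fix N
  obtain k where k: "\<bar>x \<bullet> \<xi> - rat_seq k\<bar> < r/4" using rat_seq_dense[of "r/4" "x \<bullet> \<xi>"] r by auto
  define \<beta> where "\<beta> = (1/2)^k * norm w"
  have \<beta>: "\<beta> > 0" unfolding \<beta>_def using w by simp
  define \<kappa> where "\<kappa> = measure lebesgue (ball x (r/4)) * 2 / (3 * r)"
  have \<kappa>: "\<kappa> > 0" unfolding \<kappa>_def using measure_ball_pos[of "r/4" x] r by simp
  obtain t0 where t0: "\<And>t. t \<ge> t0 \<Longrightarrow> N \<le> t * (\<kappa> * (\<beta>/(t + C + 1)) powr (1/a)) powr (1/p)"
    using ex_threshold_le_mult_powr_decay[OF \<kappa> \<beta> _ a0 _ C, of p N] p a by (auto simp: field_simps)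
  define t where "t = max t0 (max (C+1) (\<beta> / (r/4) powr a))"
  define \<delta> where "\<delta> = (\<beta>/(t + C + 1)) powr (1/a)"
  have t: "t > 0" "\<beta> / (r/4) powr a \<le> t + C + 1" unfolding t_def using C by auto
  have "0 < r/4" using r by simp
  note \<delta> = powr_level_solution[OF \<beta> a0 this t(2), folded \<delta>_def]
  have "(1/2)^k * norm w * \<delta> powr (-a) - C - 1 = t"
    using \<delta>(3) by (simp add: \<beta>_def)
  moreover have "ennreal (\<kappa> * \<delta>) \<le> distr_fun (ball x r) g ((1/2)^k * norm w * \<delta> powr (-a) - C - 1)"
    using distr_fun_singular_minus_bounded_ge[where x=x and k=k and \<delta>=\<delta> and w=w, OF \<xi> a0 a(2) r P] k \<delta>
    by (simp add: g_def \<kappa>_def mult_ac)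
  ultimately have "ennreal (\<kappa> * \<delta>) \<le> distr_fun (ball x r) g t" by simp
  moreover have "distr_fun (ball x r) g t < \<infinity>"
    by (intro distr_fun_less_top) (auto simp: emeasure_eq_measure2 sets_completionI_sets)
  ultimately have "\<kappa> * \<delta> \<le> enn2real (distr_fun (ball x r) g t)"
    using enn2real_mono[of "ennreal (\<kappa> * \<delta>)"] \<kappa> \<delta> by simp
  then have "t * (\<kappa> * \<delta>) powr (1/p) \<le> t * enn2real (distr_fun (ball x r) g t) powr (1/p)"
    using \<kappa> \<delta> t p by (intro mult_left_mono powr_mono2) auto
  moreover have "N \<le> t * (\<kappa> * \<delta>) powr (1/p)" using t0[of t] unfolding t_def \<delta>_def by simp
  ultimately have "N \<le> t * enn2real (distr_fun (ball x r) g t) powr (1/p)" by linarith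
  with t show "\<exists>t>0. N \<le> t * enn2real (distr_fun (ball x r) g t) powr (1/p)" by blast
qed (use p q r in \<open>auto simp: emeasure_eq_measure2 sets_completionI_sets\<close>)

subsection \<open>Test functions\<close>

abbreviation dir_deriv :: "('n::euclidean_space \<Rightarrow> real) \<Rightarrow> 'n \<Rightarrow> 'n \<Rightarrow> real" where
  "dir_deriv \<phi> x \<equiv> frechet_derivative \<phi> (at x)"

lemma test_function_has_derivative:
  assumes "test_function \<phi>"
  shows "(\<phi> has_derivative dir_deriv \<phi> x) (at x)"
proof -
  have "Ck 1 \<phi>" using assms unfolding test_function_def by blast
  then show ?thesis by (simp add: frechet_derivative_works)
qed

lemma test_function_continuous:
  assumes "test_function \<phi>"
  shows "continuous_on UNIV \<phi>"
  using has_derivative_continuous[OF test_function_has_derivative[OF assms]]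
  by (intro continuous_at_imp_continuous_on) auto

lemma linear_frechet_derivative_test_function:
  assumes "test_function \<phi>"
  shows "linear (dir_deriv \<phi> x)"
  using test_function_has_derivative[OF assms] by (rule has_derivative_linear)

lemma test_function_derivative_eq_sum_Basis:
  assumes tf: "test_function \<phi>"
  shows "dir_deriv \<phi> x e = (\<Sum>i\<in>Basis. (e \<bullet> i) * dir_deriv \<phi> x i)"
proof -
  have "dir_deriv \<phi> x e = dir_deriv \<phi> x (\<Sum>i\<in>Basis. (e \<bullet> i) *\<^sub>R i)" by (simp add: euclidean_representation)
  also have "\<dots> = (\<Sum>i\<in>Basis. dir_deriv \<phi> x ((e \<bullet> i) *\<^sub>R i))"
    by (rule linear_sum[OF linear_frechet_derivative_test_function[OF tf]])
  also have "\<dots> = (\<Sum>i\<in>Basis. (e \<bullet> i) * dir_deriv \<phi> x i)"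
    by (rule sum.cong) (auto simp: linear_scale[OF linear_frechet_derivative_test_function[OF tf]])
  finally show ?thesis .
qed

lemma test_function_derivative_continuous:
  assumes tf: "test_function \<phi>"
  shows "continuous_on UNIV (\<lambda>x. dir_deriv \<phi> x e)"
proof -
  have "Ck 1 \<phi>" using tf unfolding test_function_def by blast
  then have c: "\<And>i. i \<in> Basis \<Longrightarrow> continuous_on UNIV (\<lambda>x. dir_deriv \<phi> x i)" by simp
  have "continuous_on UNIV (\<lambda>x. \<Sum>i\<in>Basis. (e \<bullet> i) * dir_deriv \<phi> x i)"
    by (intro continuous_intros c)
  moreover have "(\<lambda>x. dir_deriv \<phi> x e) = (\<lambda>x. \<Sum>i\<in>Basis. (e \<bullet> i) * dir_deriv \<phi> x i)"
    by (rule ext) (rule test_function_derivative_eq_sum_Basis[OF tf])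
  ultimately show ?thesis by metis
qed

lemma test_function_compact_support:
  assumes "test_function \<phi>"
  shows "compact (closure {x. \<phi> x \<noteq> 0})"
  using assms unfolding test_function_def by blast

lemma test_function_outside_support:
  assumes tf: "test_function \<phi>" and x: "x \<notin> closure {x. \<phi> x \<noteq> 0}"
  shows "\<phi> x = 0" "dir_deriv \<phi> x e = 0"
proof -
  show "\<phi> x = 0" using x closure_subset[of "{x. \<phi> x \<noteq> 0}"] by auto
  define U where "U = - closure {x. \<phi> x \<noteq> 0}"
  have U: "open U" "x \<in> U" using x unfolding U_def by auto
  have z: "\<phi> y = 0" if "y \<in> U" for y using that closure_subset[of "{x. \<phi> x \<noteq> 0}"] unfolding U_def by auto
  have "((\<lambda>_. 0::real) has_derivative (\<lambda>_. 0)) (at x)" by simp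
  then have "(\<phi> has_derivative (\<lambda>_. 0)) (at x)"
    by (rule has_derivative_transform_within_open[OF _ U]) (simp add: z)
  then have "(\<lambda>_. 0) = dir_deriv \<phi> x" by (rule frechet_derivative_at)
  then show "dir_deriv \<phi> x e = 0" by (simp add: fun_eq_iff)
qed

lemma bounded_if_continuous_compact_support:
  fixes h :: "'n::euclidean_space \<Rightarrow> real"
  assumes c: "continuous_on UNIV h" and S: "compact S" and z: "\<And>x. x \<notin> S \<Longrightarrow> h x = 0"
  shows "\<exists>L\<ge>0. \<forall>x. \<bar>h x\<bar> \<le> L"
proof -
  have "compact (h ` S)" by (rule compact_continuous_image[OF continuous_on_subset[OF c] S]) auto
  then have "bounded (h ` S)" by (rule compact_imp_bounded)
  then obtain L where L: "\<forall>y\<in>h ` S. norm y \<le> L" unfolding bounded_iff by blast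
  have "\<bar>h x\<bar> \<le> max L 0" for x
    using L z[of x] by (cases "x \<in> S") auto
  then show ?thesis by (intro exI[of _ "max L 0"]) auto
qed

lemma test_function_bounded:
  assumes "test_function \<phi>"
  shows "\<exists>L\<ge>0. \<forall>x. \<bar>\<phi> x\<bar> \<le> L"
  using test_function_outside_support(1)[OF assms]
  by (rule bounded_if_continuous_compact_support[OF test_function_continuous[OF assms]
        test_function_compact_support[OF assms]])

lemma test_function_derivative_bounded:
  assumes "test_function \<phi>"
  shows "\<exists>L\<ge>0. \<forall>x. \<bar>dir_deriv \<phi> x e\<bar> \<le> L"
  using test_function_outside_support(2)[OF assms]
  by (rule bounded_if_continuous_compact_support[OF test_function_derivative_continuous[OF assms]
        test_function_compact_support[OF assms]])

lemma test_function_has_real_derivative_along_line: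
  assumes tf: "test_function \<phi>"
  shows "((\<lambda>t. \<phi> (x + t *\<^sub>R e)) has_real_derivative dir_deriv \<phi> (x + t *\<^sub>R e) e) (at t)"
proof -
  have d1: "((\<lambda>t. x + t *\<^sub>R e) has_derivative (\<lambda>h. h *\<^sub>R e)) (at t)"
    by (auto intro!: derivative_eq_intros)
  have "((\<lambda>t. \<phi> (x + t *\<^sub>R e)) has_derivative (\<lambda>h. dir_deriv \<phi> (x + t *\<^sub>R e) (h *\<^sub>R e))) (at t)"
    by (rule has_derivative_compose[OF d1 test_function_has_derivative[OF tf]])
  moreover have "(\<lambda>h. dir_deriv \<phi> (x + t *\<^sub>R e) (h *\<^sub>R e)) = (*) (dir_deriv \<phi> (x + t *\<^sub>R e) e)"
    by (auto simp: linear_scale[OF linear_frechet_derivative_test_function[OF tf]])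
  ultimately show ?thesis by (simp add: has_field_derivative_def)
qed

lemma test_function_lipschitz_along_line:
  assumes tf: "test_function \<phi>" and L: "\<And>y. \<bar>dir_deriv \<phi> y e\<bar> \<le> L"
  shows "\<bar>\<phi> (x + s *\<^sub>R e) - \<phi> x\<bar> \<le> L * \<bar>s\<bar>"
proof (cases "s = 0")
  case True then show ?thesis by simp
next
  case False
  define \<psi> where "\<psi> t = \<phi> (x + t *\<^sub>R e)" for t
  have der: "\<And>t. DERIV \<psi> t :> dir_deriv \<phi> (x + t *\<^sub>R e) e"
    unfolding \<psi>_def by (rule test_function_has_real_derivative_along_line[OF tf])
  have "\<exists>z. \<bar>\<psi> s - \<psi> 0\<bar> = \<bar>s\<bar> * \<bar>dir_deriv \<phi> (x + z *\<^sub>R e) e\<bar>"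
  proof (cases "s > 0")
    case True
    from MVT2[OF True der] obtain z where "\<psi> s - \<psi> 0 = (s - 0) * dir_deriv \<phi> (x + z *\<^sub>R e) e" by blast
    then show ?thesis by (auto simp: abs_mult)
  next
    case False
    with \<open>s \<noteq> 0\<close> have "s < 0" by simp
    from MVT2[OF this der] obtain z where "\<psi> 0 - \<psi> s = (0 - s) * dir_deriv \<phi> (x + z *\<^sub>R e) e" by blast
    then have "\<bar>\<psi> s - \<psi> 0\<bar> = \<bar>s\<bar> * \<bar>dir_deriv \<phi> (x + z *\<^sub>R e) e\<bar>" by (auto simp: abs_mult abs_minus_commute)
    then show ?thesis by blast
  qed
  then obtain z where z: "\<bar>\<psi> s - \<psi> 0\<bar> = \<bar>s\<bar> * \<bar>dir_deriv \<phi> (x + z *\<^sub>R e) e\<bar>" by blast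
  also have "\<dots> \<le> \<bar>s\<bar> * L" by (rule mult_left_mono[OF L]) simp
  finally show ?thesis unfolding \<psi>_def by (simp add: mult.commute)
qed

lemma lborel_integral_translate:
  fixes H :: "'n::euclidean_space \<Rightarrow> real"
  assumes Hm: "H \<in> borel_measurable borel" and Hi: "integrable lborel H"
  shows "integrable lborel (\<lambda>x. H (c + x))" "(\<integral>x. H (c + x) \<partial>lborel) = (\<integral>x. H x \<partial>lborel)"
proof -
  have T: "(+) c \<in> measurable lborel borel" by simp
  show "integrable lborel (\<lambda>x. H (c + x))"
    using integrable_distr_eq[OF T Hm] Hi lborel_distr_plus[of c] by simp
  show "(\<integral>x. H (c + x) \<partial>lborel) = (\<integral>x. H x \<partial>lborel)"
    using integral_distr[OF T Hm] lborel_distr_plus[of c] by simp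
qed

lemma integrable_mult_bounded_vanishing_outside:
  fixes f h :: "'n::euclidean_space \<Rightarrow> real"
  assumes fS: "integrable lborel (\<lambda>x. indicator S x * f x)"
    and hm: "h \<in> borel_measurable borel" and fm: "f \<in> borel_measurable borel"
    and L: "\<And>x. \<bar>h x\<bar> \<le> L" and z: "\<And>x. x \<notin> S \<Longrightarrow> h x = 0"
  shows "integrable lborel (\<lambda>x. f x * h x)"
proof (rule Bochner_Integration.integrable_bound[OF integrable_mult_right[of L, OF fS]])
  show "(\<lambda>x. f x * h x) \<in> borel_measurable lborel" using hm fm by measurable
  have "L \<ge> 0" using L[of 0] by linarith
  then show "AE x in lborel. norm (f x * h x) \<le> norm (L * (indicator S x * f x))"
    using z mult_left_mono[OF L abs_ge_zero]
    by (intro AE_I2) (auto simp: abs_mult mult.commute indicator_def)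
qed

lemma integral_mult_difference_along_invariant_eq_0:
  fixes f \<phi> :: "'n::euclidean_space \<Rightarrow> real"
  assumes fm: "f \<in> borel_measurable borel" and \<phi>m: "\<phi> \<in> borel_measurable borel"
    and int: "integrable lborel (\<lambda>x. f x * \<phi> x)"
    and inv: "\<And>x. f (x + s *\<^sub>R e) = f x"
  shows "(\<integral>x. f x * (\<phi> (x + s *\<^sub>R e) - \<phi> x) \<partial>lborel) = 0"
proof -
  define H where "H x = f x * \<phi> x" for x
  have Hm: "H \<in> borel_measurable borel" unfolding H_def using fm \<phi>m by measurable
  have "f x * (\<phi> (x + s *\<^sub>R e) - \<phi> x) = H (s *\<^sub>R e + x) - H x" for x
    using inv[of x] by (simp add: H_def add.commute algebra_simps)
  then show ?thesis
    using lborel_integral_translate[OF Hm int[folded H_def], of "s *\<^sub>R e"] int[folded H_def] by simp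
qed

lemma test_function_difference_quotient_le:
  assumes \<phi>: "test_function \<phi>" and L: "\<And>x. \<bar>dir_deriv \<phi> x e\<bar> \<le> L"
    and R: "\<And>x. \<phi> x \<noteq> 0 \<Longrightarrow> norm x \<le> R" and s: "0 < s" "s \<le> 1"
  shows "\<bar>(\<phi> (x + s *\<^sub>R e) - \<phi> x) / s\<bar> \<le> L * indicator (cball 0 (R + norm e)) x"
proof (cases "x \<in> cball 0 (R + norm e)")
  case True
  have "\<bar>\<phi> (x + s *\<^sub>R e) - \<phi> x\<bar> \<le> L * s"
    using test_function_lipschitz_along_line[OF \<phi> L, of x s] s by simp
  then have "\<bar>(\<phi> (x + s *\<^sub>R e) - \<phi> x) / s\<bar> \<le> L"
    using s by (simp add: divide_le_eq)
  then show ?thesis using True by simp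
next
  case False
  then have x: "R + norm e < norm x" by simp
  have "norm (s *\<^sub>R e) \<le> norm e" using s by (simp add: mult_left_le_one_le)
  moreover have "norm x \<le> norm (x + s *\<^sub>R e) + norm (s *\<^sub>R e)"
    using norm_triangle_ineq4[of "x + s *\<^sub>R e" "s *\<^sub>R e"] by simp
  ultimately have "R < norm x" "R < norm (x + s *\<^sub>R e)"
    using x norm_ge_zero[of e] by linarith+
  then have "\<phi> x = 0" "\<phi> (x + s *\<^sub>R e) = 0" using R not_le by blast+
  then show ?thesis using False by simp
qed

lemma test_function_difference_quotient_tendsto:
  assumes \<phi>: "test_function \<phi>" and s: "filterlim s (at 0) sequentially"
  shows "(\<lambda>n. (\<phi> (x + s n *\<^sub>R e) - \<phi> x) / s n) \<longlonglongrightarrow> dir_deriv \<phi> x e"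
proof -
  have "((\<lambda>t. (\<phi> (x + t *\<^sub>R e) - \<phi> (x + 0 *\<^sub>R e)) / (t - 0)) \<longlongrightarrow> dir_deriv \<phi> (x + 0 *\<^sub>R e) e) (at 0)"
    using test_function_has_real_derivative_along_line[OF \<phi>, of x e 0]
    unfolding has_field_derivative_iff .
  then have "((\<lambda>t. (\<phi> (x + t *\<^sub>R e) - \<phi> x) / t) \<longlongrightarrow> dir_deriv \<phi> x e) (at 0)" by simp
  from filterlim_compose[OF this s] show ?thesis .
qed

text \<open>A locally integrable function that is invariant in direction \<open>e\<close> has vanishing
  distributional derivative \<open>\<partial>\<^sub>e\<close>: pass to the limit in the vanishing integrals of the
  difference quotients, dominated by \<open>sup \<bar>\<partial>\<^sub>e\<phi>\<bar> \<bar>f\<bar>\<close> on a neighbourhood of the support.\<close>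
lemma integral_mult_dir_deriv_eq_0_if_invariant:
  fixes f \<phi> :: "'n::euclidean_space \<Rightarrow> real" and e :: 'n
  assumes fm: "f \<in> borel_measurable borel"
    and fi: "\<And>K. compact K \<Longrightarrow> integrable lborel (\<lambda>x. indicator K x * f x)"
    and inv: "\<And>x s. f (x + s *\<^sub>R e) = f x"
    and \<phi>: "test_function \<phi>"
  shows "(\<integral>x. f x * dir_deriv \<phi> x e \<partial>lborel) = 0"
proof -
  define S where "S = closure {x. \<phi> x \<noteq> 0}"
  have S: "compact S" unfolding S_def by (rule test_function_compact_support[OF \<phi>])
  obtain R where R: "\<And>x. x \<in> S \<Longrightarrow> norm x \<le> R"
    using compact_imp_bounded[OF S] bounded_iff by metis
  have R': "norm x \<le> R" if "\<phi> x \<noteq> 0" for x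
  proof (rule R)
    show "x \<in> S" unfolding S_def using that closure_subset[of "{x. \<phi> x \<noteq> 0}"] by auto
  qed
  define K where "K = cball (0::'n) (R + norm e)"
  obtain L\<phi> where L\<phi>: "\<And>x. \<bar>\<phi> x\<bar> \<le> L\<phi>" using test_function_bounded[OF \<phi>] by blast
  obtain L where L: "\<And>x. \<bar>dir_deriv \<phi> x e\<bar> \<le> L"
    using test_function_derivative_bounded[OF \<phi>] by blast
  have [measurable]: "\<phi> \<in> borel_measurable borel" "(\<lambda>x. dir_deriv \<phi> x e) \<in> borel_measurable borel"
    by (intro borel_measurable_continuous_onI test_function_continuous[OF \<phi>]
        test_function_derivative_continuous[OF \<phi>])+
  have [measurable]: "f \<in> borel_measurable borel" by (rule fm)
  have "\<phi> x = 0" if "x \<notin> S" for x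
    using test_function_outside_support(1)[OF \<phi>] that unfolding S_def by blast
  then have f\<phi>: "integrable lborel (\<lambda>x. f x * \<phi> x)"
    by (intro integrable_mult_bounded_vanishing_outside[OF fi[OF S] _ fm L\<phi>]) measurable
  define s where "s n = inverse (real (Suc n))" for n
  have s: "s n > 0" "s n \<le> 1" for n unfolding s_def by (auto simp: field_simps)
  have "filterlim s (at 0) sequentially"
    unfolding filterlim_at using s LIMSEQ_inverse_real_of_nat unfolding s_def
    by (auto intro!: always_eventually)
  define Q where "Q n x = f x * ((\<phi> (x + s n *\<^sub>R e) - \<phi> x) / s n)" for n x
  have "(\<lambda>n. \<integral>x. Q n x \<partial>lborel) \<longlonglongrightarrow> (\<integral>x. f x * dir_deriv \<phi> x e \<partial>lborel)"
  proof (rule integral_dominated_convergence)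
    show "integrable lborel (\<lambda>x. L * \<bar>indicator K x * f x\<bar>)"
      using fi[of K] by (intro integrable_mult_right integrable_abs) (auto simp: K_def)
    show "AE x in lborel. norm (Q n x) \<le> L * \<bar>indicator K x * f x\<bar>" for n
    proof (rule AE_I2)
      fix x
      have "\<bar>f x\<bar> * \<bar>(\<phi> (x + s n *\<^sub>R e) - \<phi> x) / s n\<bar> \<le> \<bar>f x\<bar> * (L * indicator K x)"
        using test_function_difference_quotient_le[OF \<phi> L R' s(1,2)] unfolding K_def
        by (rule mult_left_mono[OF _ abs_ge_zero])
      then show "norm (Q n x) \<le> L * \<bar>indicator K x * f x\<bar>"
        by (simp add: Q_def abs_mult mult_ac)
    qed
    show "AE x in lborel. (\<lambda>n. Q n x) \<longlonglongrightarrow> f x * dir_deriv \<phi> x e"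
      unfolding Q_def using test_function_difference_quotient_tendsto[OF \<phi> \<open>filterlim s _ _\<close>]
      by (intro AE_I2 tendsto_mult_left)
  next
    have "(\<lambda>x. \<phi> (x + s n *\<^sub>R e)) \<in> borel_measurable borel" for n
      by (intro borel_measurable_continuous_onI continuous_on_compose2[OF test_function_continuous[OF \<phi>]]
          continuous_intros) auto
    then show "Q n \<in> borel_measurable lborel" for n
      unfolding Q_def using fm by (intro borel_measurable_times borel_measurable_divide borel_measurable_diff) auto
  qed simp
  moreover have "(\<integral>x. Q n x \<partial>lborel) = 0" for n
  proof -
    have "(\<integral>x. Q n x \<partial>lborel) = (\<integral>x. f x * (\<phi> (x + s n *\<^sub>R e) - \<phi> x) \<partial>lborel) / s n"
      unfolding Q_def times_divide_eq_right by (rule integral_divide_zero)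
    then show ?thesis
      using integral_mult_difference_along_invariant_eq_0[of f \<phi> "s n" e] f\<phi> inv by simp
  qed
  ultimately have "(\<lambda>n. 0::real) \<longlonglongrightarrow> (\<integral>x. f x * dir_deriv \<phi> x e \<partial>lborel)" by simp
  then show ?thesis by (simp add: LIMSEQ_const_iff)
qed

subsection \<open>Ridge functions have vanishing \<open>\<A>\<close>-derivative\<close>

lemma L1_loc_rational_singularities:
  fixes \<xi> :: "'n::euclidean_space" and w :: "'v::euclidean_space"
  assumes \<xi>: "norm \<xi> = 1" and a: "0 < a" "a < 1"
  shows "L1_loc (\<lambda>y. enn2real (rational_singularities a (y \<bullet> \<xi>)) *\<^sub>R w)"
  unfolding L1_loc_def set_integrable_def
proof (intro allI impI)
  fix K :: "'n set" assume "compact K"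
  then have "integrable lebesgue (\<lambda>y. indicator K y * enn2real (rational_singularities a (y \<bullet> \<xi>)))"
    using integrable_indicator_rational_singularities[OF \<xi> a] by (simp add: integrable_completion)
  then show "integrable lebesgue (\<lambda>y. indicator K y *\<^sub>R enn2real (rational_singularities a (y \<bullet> \<xi>)) *\<^sub>R w)"
    by (simp add: integrable_scaleR_left)
qed

lemma eq_scaleR_if_orthogonal_to_complement:
  fixes v \<xi> :: "'a::real_inner"
  assumes \<xi>: "norm \<xi> = 1" and orth: "\<And>e. e \<bullet> \<xi> = 0 \<Longrightarrow> v \<bullet> e = 0"
  shows "v = (v \<bullet> \<xi>) *\<^sub>R \<xi>"
proof -
  define e where "e = v - (v \<bullet> \<xi>) *\<^sub>R \<xi>"
  have "\<xi> \<bullet> \<xi> = 1" using \<xi> by (simp add: norm_eq_sqrt_inner)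
  then have "e \<bullet> \<xi> = 0" by (simp add: e_def inner_diff_left)
  then have "v \<bullet> e = 0" "\<xi> \<bullet> e = 0" using orth by (simp_all add: inner_commute)
  then have "e \<bullet> e = 0" by (simp add: e_def inner_diff_left)
  then show ?thesis by (simp add: e_def)
qed

lemma integrable_mult_dir_deriv:
  fixes f \<phi> :: "'n::euclidean_space \<Rightarrow> real"
  assumes fm: "f \<in> borel_measurable borel"
    and fi: "\<And>K. compact K \<Longrightarrow> integrable lborel (\<lambda>x. indicator K x * f x)"
    and \<phi>: "test_function \<phi>"
  shows "integrable lborel (\<lambda>x. f x * dir_deriv \<phi> x e)"
proof -
  obtain L where "\<And>x. \<bar>dir_deriv \<phi> x e\<bar> \<le> L" using test_function_derivative_bounded[OF \<phi>] by blast
  then show ?thesis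
    using test_function_outside_support(2)[OF \<phi>]
    by (intro integrable_mult_bounded_vanishing_outside[OF fi[OF test_function_compact_support[OF \<phi>]] _ fm])
       (auto intro: borel_measurable_continuous_onI test_function_derivative_continuous[OF \<phi>])
qed

lemma integral_gradient_parallel_if_invariant:
  fixes f \<phi> :: "'n::euclidean_space \<Rightarrow> real" and \<xi> :: 'n
  assumes fm: "f \<in> borel_measurable borel"
    and fi: "\<And>K. compact K \<Longrightarrow> integrable lborel (\<lambda>x. indicator K x * f x)"
    and inv: "\<And>x e s. e \<bullet> \<xi> = 0 \<Longrightarrow> f (x + s *\<^sub>R e) = f x"
    and \<xi>: "norm \<xi> = 1" and \<phi>: "test_function \<phi>"
  obtains c where "(\<Sum>j\<in>Basis. (\<integral>x. f x * dir_deriv \<phi> x j \<partial>lborel) *\<^sub>R j) = c *\<^sub>R \<xi>"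
proof -
  define v where "v = (\<Sum>j\<in>Basis. (\<integral>x. f x * dir_deriv \<phi> x j \<partial>lborel) *\<^sub>R j)"
  note int = integrable_mult_dir_deriv[OF fm fi \<phi>]
  have "v \<bullet> e = 0" if "e \<bullet> \<xi> = 0" for e
  proof -
    have "v \<bullet> e = (\<Sum>j\<in>Basis. \<integral>x. (e \<bullet> j) * (f x * dir_deriv \<phi> x j) \<partial>lborel)"
      unfolding v_def inner_sum_left by (auto simp: inner_commute intro!: sum.cong)
    also have "\<dots> = (\<integral>x. (\<Sum>j\<in>Basis. (e \<bullet> j) * (f x * dir_deriv \<phi> x j)) \<partial>lborel)"
      by (rule Bochner_Integration.integral_sum[symmetric]) (intro integrable_mult_right int)
    also have "\<dots> = (\<integral>x. f x * dir_deriv \<phi> x e \<partial>lborel)"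
      by (intro Bochner_Integration.integral_cong)
        (auto simp: test_function_derivative_eq_sum_Basis[OF \<phi>, of _ e] sum_distrib_left algebra_simps)
    also have "\<dots> = 0"
      using that by (intro integral_mult_dir_deriv_eq_0_if_invariant[OF fm fi _ \<phi>] inv)
    finally show ?thesis .
  qed
  then show ?thesis
    using that eq_scaleR_if_orthogonal_to_complement[OF \<xi>] unfolding v_def by blast
qed

lemma BVA_loc_rational_singularities:
  fixes B :: "'v::euclidean_space \<Rightarrow> 'n::euclidean_space \<Rightarrow> 'w::euclidean_space"
  assumes B: "bilinear B" and \<xi>: "norm \<xi> = 1" and w: "B w \<xi> = 0" and a: "0 < a" "a < 1"
  shows "BVA_loc B (\<lambda>y. enn2real (rational_singularities a (y \<bullet> \<xi>)) *\<^sub>R w)"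
proof -
  define f where "f y = enn2real (rational_singularities a (y \<bullet> \<xi>))" for y
  have fm: "f \<in> borel_measurable borel" unfolding f_def by measurable
  have fi: "integrable lborel (\<lambda>x. indicator K x * f x)" if "compact K" for K
    unfolding f_def by (rule integrable_indicator_rational_singularities[OF \<xi> a that])
  have inv: "f (x + s *\<^sub>R e) = f x" if "e \<bullet> \<xi> = 0" for x e s
    using that by (simp add: f_def inner_add_left)
  have "(\<Sum>j\<in>Basis. \<integral>x. dir_deriv \<phi> x j *\<^sub>R B (f x *\<^sub>R w) j \<partial>lebesgue) = 0"
    if \<phi>: "test_function \<phi>" for \<phi>
  proof -
    obtain c where c: "(\<Sum>j\<in>Basis. (\<integral>x. f x * dir_deriv \<phi> x j \<partial>lborel) *\<^sub>R j) = c *\<^sub>R \<xi>"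
      using integral_gradient_parallel_if_invariant[OF fm fi inv \<xi> \<phi>] by blast
    have "(\<integral>x. dir_deriv \<phi> x j *\<^sub>R B (f x *\<^sub>R w) j \<partial>lebesgue)
        = (\<integral>x. f x * dir_deriv \<phi> x j \<partial>lborel) *\<^sub>R B w j" for j
    proof -
      have "(\<integral>x. dir_deriv \<phi> x j *\<^sub>R B (f x *\<^sub>R w) j \<partial>lebesgue) = (\<integral>x. (f x * dir_deriv \<phi> x j) *\<^sub>R B w j \<partial>lebesgue)"
        by (simp add: bilinear_lmul[OF B] mult.commute)
      also have "\<dots> = (\<integral>x. f x * dir_deriv \<phi> x j \<partial>lborel) *\<^sub>R B w j"
        using integrable_mult_dir_deriv[OF fm fi \<phi>, of j]
        by (simp add: integrable_completion integral_completion)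
      finally show ?thesis .
    qed
    then have "(\<Sum>j\<in>Basis. \<integral>x. dir_deriv \<phi> x j *\<^sub>R B (f x *\<^sub>R w) j \<partial>lebesgue)
        = B w (\<Sum>j\<in>Basis. (\<integral>x. f x * dir_deriv \<phi> x j \<partial>lborel) *\<^sub>R j)"
      using B by (simp add: bilinear_def linear_sum linear_scale)
    also have "\<dots> = 0" by (simp add: c bilinear_rmul[OF B] w)
    finally show ?thesis .
  qed
  moreover have "W_radon (null_measure lborel) (\<lambda>_. 0::'w)"
    unfolding W_radon_def by simp
  ultimately show ?thesis
    unfolding BVA_loc_def f_def
    using L1_loc_rational_singularities[OF \<xi> a] by (intro conjI exI[of _ "null_measure lborel"]) auto
qed

subsection \<open>Ellipticity\<close>

lemma not_Lpq_differentiable_at_rational_singularities: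
  fixes \<xi> x :: "'n::euclidean_space" and w :: "'v::euclidean_space"
  assumes \<xi>: "norm \<xi> = 1" and w: "w \<noteq> 0" and p: "p > 1" and a: "1/p < a" "a < 1" and q: "1 \<le> q"
  shows "\<not> Lpq_differentiable_at p q (\<lambda>y. enn2real (rational_singularities a (y \<bullet> \<xi>)) *\<^sub>R w) x"
proof
  assume "Lpq_differentiable_at p q (\<lambda>y. enn2real (rational_singularities a (y \<bullet> \<xi>)) *\<^sub>R w) x"
  then obtain c M where M: "linear M" and
    ev: "\<forall>\<epsilon>>0. \<forall>\<^sub>F r in at_right 0. lorentz_norm p q (ball x r)
        (\<lambda>y. enn2real (rational_singularities a (y \<bullet> \<xi>)) *\<^sub>R w - (c + M (y - x)))
      \<le> ennreal (\<epsilon> * r powr (1 + real DIM('n) / p))"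
    unfolding Lpq_differentiable_at_def by blast
  have "\<forall>\<^sub>F r in at_right 0. lorentz_norm p q (ball x r)
        (\<lambda>y. enn2real (rational_singularities a (y \<bullet> \<xi>)) *\<^sub>R w - (c + M (y - x)))
      \<le> ennreal (1 * r powr (1 + real DIM('n) / p)) \<and> (0::real) < r"
    using ev[rule_format, of 1] eventually_at_right_less[of "0::real"] by (auto intro: eventually_conj)
  then obtain r :: real where r: "r > 0" and
    "lorentz_norm p q (ball x r) (\<lambda>y. enn2real (rational_singularities a (y \<bullet> \<xi>)) *\<^sub>R w - (c + M (y - x)))
      \<le> ennreal (1 * r powr (1 + real DIM('n) / p))"
    using eventually_happens'[OF trivial_limit_at_right_real] by blast
  then have "lorentz_norm p q (ball x r) (\<lambda>y. enn2real (rational_singularities a (y \<bullet> \<xi>)) *\<^sub>R w - (c + M (y - x)))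
      \<noteq> top"
    by (auto simp: top_unique)
  moreover obtain K where K: "K > 0" "\<And>z. norm (M z) \<le> K * norm z"
    using linear_bounded_pos[OF M] by blast
  have "norm (c + M (y - x)) \<le> norm c + K * r" if "y \<in> ball x r" for y
  proof -
    have "norm (y - x) < r" using that by (simp add: dist_norm norm_minus_commute)
    then have "norm (M (y - x)) \<le> K * r"
      using K(2)[of "y - x"] K(1) by (smt (verit) mult_left_mono)
    then show ?thesis using norm_triangle_ineq[of c "M (y - x)"] by linarith
  qed
  moreover have "(\<lambda>y. c + M (y - x)) \<in> borel_measurable lebesgue"
  proof -
    have [measurable]: "M \<in> borel_measurable borel"
      using M by (intro borel_measurable_continuous_onI linear_continuous_on) (simp add: linear_conv_bounded_linear)
    show ?thesis by (rule measurable_completion) measurable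
  qed
  ultimately show False
    using lorentz_norm_singular_minus_bounded_eq_top[OF \<xi> w p a r _ _ q] by blast
qed

lemma not_elliptic_obtains_direction:
  fixes B :: "'v::euclidean_space \<Rightarrow> 'n::euclidean_space \<Rightarrow> 'w::euclidean_space"
  assumes "bilinear B" and "\<not> elliptic B"
  obtains w \<xi> where "w \<noteq> 0" "norm \<xi> = 1" "B w \<xi> = 0"
proof -
  obtain \<xi>0 :: 'n where "\<xi>0 \<noteq> 0" "\<not> inj (\<lambda>v. B v \<xi>0)" using assms(2) unfolding elliptic_def by blast
  then obtain v1 v2 where "v1 \<noteq> v2" "B v1 \<xi>0 = B v2 \<xi>0" unfolding inj_def by blast
  then show ?thesis
    using \<open>\<xi>0 \<noteq> 0\<close> that[of "v1 - v2" "(1 / norm \<xi>0) *\<^sub>R \<xi>0"]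
    by (simp add: bilinear_lsub[OF assms(1)] bilinear_rmul[OF assms(1)])
qed

theorem lemma5p2:
  fixes B :: "'v::euclidean_space \<Rightarrow> 'n::euclidean_space \<Rightarrow> 'w::euclidean_space"
    and p :: real and q :: ennreal
  assumes "bilinear B"
    and "1 < p"
    and "1 \<le> q"
    and "\<forall>u::'n \<Rightarrow> 'v. BVA_loc B u \<longrightarrow> (AE x in lebesgue. Lpq_differentiable_at p q u x)"
  shows "elliptic B"
proof (rule ccontr)
  assume "\<not> elliptic B"
  then obtain w \<xi> where w: "w \<noteq> 0" and \<xi>: "norm \<xi> = 1" and Bw: "B w \<xi> = 0"
    using not_elliptic_obtains_direction[OF assms(1)] by blast
  define a where "a = (1 + 1/p) / 2"
  have a: "1/p < a" "a < 1" "0 < a" unfolding a_def using assms(2) by (auto simp: field_simps)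
  define u where "u y = enn2real (rational_singularities a (y \<bullet> \<xi>)) *\<^sub>R w" for y
  have "BVA_loc B u"
    unfolding u_def using BVA_loc_rational_singularities[OF assms(1) \<xi> Bw a(3,2)] .
  then have "AE x in lebesgue. Lpq_differentiable_at p q u x" using assms(4) by blast
  moreover have "\<not> Lpq_differentiable_at p q u x" for x
    unfolding u_def using not_Lpq_differentiable_at_rational_singularities[OF \<xi> w assms(2) a(1,2) assms(3)] .
  ultimately have "AE x::'n in lebesgue. False" by simp
  then have "emeasure lebesgue (UNIV :: 'n set) = 0" by (simp add: ae_filter_eq_bot_iff)
  then show False using emeasure_ball_pos[of 1 "0::'n"] emeasure_mono[of "ball (0::'n) 1" UNIV lebesgue]
    by simp
qed

end
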